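(* Let $\theta_1,\theta_2,\dots\ge0$ with $\theta_n\to\theta>0$. Then, as $n\to\infty$, \[ h_n=\frac{n^{\theta-1}}{\Gamma(\theta)}\,\Lambda(n)\,(1+o(1)), \] where $\Lambda$ is defined on $[1,\infty)$ by $\Lambda\bigl(\frac1{1-s}\bigr)=\exp\sum_{j\ge1}\frac{\theta_j-\theta}{j}s^j$ for $0\le s<1$.
   Context: For $\sigma\in\mathcal{S}_n$, $R_j(\sigma)$ is the number of cycles of length $j$; $h_0=1$ and $h_n=\frac1{n!}\sum_{\sigma\in\mathcal{S}_n}\prod_{j\ge1}\theta_j^{R_j(\sigma)}$. *)

theory Defs
  imports "HOL-Analysis.Analysis" "HOL-Combinatorics.Permutations" "HOL-Combinatorics.Orbits"
    "HOL-Library.Landau_Symbols"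
begin

definition perm_cycles :: "nat \<Rightarrow> (nat \<Rightarrow> nat) \<Rightarrow> nat set set" where
  "perm_cycles n \<sigma> = (\<lambda>x. orbit \<sigma> x) ` {1..n}"

definition cycle_count :: "nat \<Rightarrow> (nat \<Rightarrow> nat) \<Rightarrow> nat \<Rightarrow> nat" where
  "cycle_count n \<sigma> j = card {C \<in> perm_cycles n \<sigma>. card C = j}"

text \<open>h_n = (1/n!) \<Sum>_{\<sigma> \<in> S_n} \<Prod>_{j\<ge>1} \<theta>_j^{R_j(\<sigma>)}; only j \<le> n contribute
  (R_j = 0 for j > n), so the product is over {1..n}. For n = 0 this gives h_0 = 1.\<close>
definition hseq :: "(nat \<Rightarrow> real) \<Rightarrow> nat \<Rightarrow> real" where
  "hseq \<theta> n = (1 / fact n) *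
     (\<Sum>\<sigma> \<in> {\<sigma>. \<sigma> permutes {1..n}}. \<Prod>j\<in>{1..n}. \<theta> j ^ cycle_count n \<sigma> j)"

text \<open>\<Lambda>(x) for x \<ge> 1, via \<Lambda>(1/(1-s)) = exp (\<Sum>_{j\<ge>1} (\<theta>_j-\<theta>)/j s^j), i.e. s = 1 - 1/x.\<close>
definition Lambda :: "(nat \<Rightarrow> real) \<Rightarrow> real \<Rightarrow> real \<Rightarrow> real" where
  "Lambda \<theta> th x = exp (\<Sum>j. (\<theta> (Suc j) - th) / real (Suc j) * (1 - 1 / x) ^ (Suc j))"

end

theory Submission
  imports Defs "HOL-Combinatorics.Cycles" "HOL-Real_Asymp.Real_Asymp"
begin

text \<open>
  The proof has three parts.
  (1) Combinatorics: splitting off the cycle through a fixed point shows that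
      \<open>h\<^sub>n\<close> satisfies the recurrence \<open>n h\<^sub>n = \<Sum>\<^sub>k\<^sub>=\<^sub>1\<^sub>.\<^sub>.\<^sub>n \<theta>\<^sub>k h\<^sub>n\<^sub>-\<^sub>k\<close>, \<open>h\<^sub>0 = 1\<close>
      (the function \<open>hrec\<close>), hence the generating function identity
      \<open>\<Sum> h\<^sub>n t\<^sup>n = exp (\<Sum> \<theta>\<^sub>j t\<^sup>j / j) = (1 - t) powr (-\<theta>) * exp (\<Phi>(t))\<close>,
      where \<open>\<Phi>\<close> (\<open>Lambda_log\<close>) is the exponent in the definition of \<open>\<Lambda>\<close>.
  (2) Analysis of the generating function: \<open>\<Phi>\<close> varies slowly as \<open>t \<rightarrow> 1\<close>, so the
      Laplace transforms \<open>\<Sum> h\<^sub>n e\<^sup>-\<^sup>(\<^sup>k\<^sup>+\<^sup>1\<^sup>)\<^sup>n\<^sup>/\<^sup>N\<close> behave like \<open>(k+1)\<^sup>-\<^sup>\<theta> N\<^sup>\<theta> \<Lambda>(N)\<close>.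
      A Karamata-type Tauberian theorem (polynomial sandwiches of an indicator,
      with the constant sequence \<open>\<theta>\<^sub>j = \<theta>\<close> as a reference whose partial sums are
      known explicitly) then gives \<open>\<Sum>\<^sub>n\<^sub>\<le>\<^sub>N h\<^sub>n \<sim> N\<^sup>\<theta> \<Lambda>(N) / \<Gamma>(\<theta>+1)\<close>.
  (3) The recurrence itself shows \<open>N h\<^sub>N / \<Sum>\<^sub>n\<^sub>\<le>\<^sub>N h\<^sub>n \<rightarrow> \<theta>\<close>; dividing the two
      asymptotics and using \<open>\<Gamma>(\<theta>+1) = \<theta> \<Gamma>(\<theta>)\<close> yields the theorem.
\<close>

section \<open>The recurrence for \<open>h\<^sub>n\<close>\<close>

fun hrec :: "(nat \<Rightarrow> real) \<Rightarrow> nat \<Rightarrow> real" where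
  "hrec w 0 = 1"
| "hrec w (Suc n) = (\<Sum>k\<le>n. w (Suc k) * hrec w (n - k)) / real (Suc n)"

definition cycle_weight :: "(nat \<Rightarrow> real) \<Rightarrow> ('a \<Rightarrow> 'a) \<Rightarrow> 'a set \<Rightarrow> real" where
  "cycle_weight w \<sigma> A = (\<Prod>C\<in>(\<lambda>x. orbit \<sigma> x) ` A. w (card C))"

definition perm_weight_sum :: "(nat \<Rightarrow> real) \<Rightarrow> 'a set \<Rightarrow> real" where
  "perm_weight_sum w A = (\<Sum>\<sigma>\<in>{\<sigma>. \<sigma> permutes A}. cycle_weight w \<sigma> A)"

lemma orbits_split_cycle:
  assumes "\<sigma> permutes A" "finite A" "a \<in> A"
  defines "Ob \<equiv> orbit \<sigma> a"
  defines "\<tau> \<equiv> perm_restrict \<sigma> (A - Ob)"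
  shows "(\<lambda>x. orbit \<sigma> x) ` A = insert Ob ((\<lambda>x. orbit \<tau> x) ` (A - Ob))"
    and "Ob \<notin> (\<lambda>x. orbit \<tau> x) ` (A - Ob)"
    and "\<tau> permutes (A - Ob)" and "Ob \<subseteq> A" and "a \<in> Ob"
proof -
  have perm: "permutation \<sigma>" using assms(1,2) permutation_permutes by blast
  have cyc: "cyclic_on \<sigma> Ob" unfolding Ob_def using assms(1,2) by (rule cyclic_on_orbit)
  show tp: "\<tau> permutes (A - Ob)" unfolding \<tau>_def by (rule perm_restrict_diff_cyclic[OF assms(1) cyc])
  show OA: "Ob \<subseteq> A" unfolding Ob_def by (rule permutes_orbit_subset[OF assms(1,3)])
  show aO: "a \<in> Ob" unfolding Ob_def by (rule permutation_self_in_orbit[OF perm])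
  have eqo: "orbit \<tau> x = orbit \<sigma> x" if "x \<in> A - Ob" for x
  proof (rule orbit_cong0[OF that])
    show "\<tau> \<in> A - Ob \<rightarrow> A - Ob" using tp permutes_in_image by fastforce
    show "\<And>y. y \<in> A - Ob \<Longrightarrow> \<tau> y = \<sigma> y" unfolding \<tau>_def by (simp add: perm_restrict_simps)
  qed
  have eqOb: "orbit \<sigma> x = Ob" if "x \<in> Ob" for x using orbit_cyclic_eq3[OF cyc that] .
  show "(\<lambda>x. orbit \<sigma> x) ` A = insert Ob ((\<lambda>x. orbit \<tau> x) ` (A - Ob))"
  proof
    show "(\<lambda>x. orbit \<sigma> x) ` A \<subseteq> insert Ob ((\<lambda>x. orbit \<tau> x) ` (A - Ob))"
      using eqo eqOb by (auto simp del: Diff_iff)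
    show "insert Ob ((\<lambda>x. orbit \<tau> x) ` (A - Ob)) \<subseteq> (\<lambda>x. orbit \<sigma> x) ` A"
    proof
      fix C assume "C \<in> insert Ob ((\<lambda>x. orbit \<tau> x) ` (A - Ob))"
      then consider "C = Ob" | x where "x \<in> A - Ob" "C = orbit \<tau> x" by blast
      then show "C \<in> (\<lambda>x. orbit \<sigma> x) ` A"
      proof cases
        case 1 then show ?thesis using eqOb[OF aO] aO OA by (metis image_eqI subsetD)
      next
        case 2 then show ?thesis using eqo[OF 2(1)] by blast
      qed
    qed
  qed
  show "Ob \<notin> (\<lambda>x. orbit \<tau> x) ` (A - Ob)"
  proof
    assume "Ob \<in> (\<lambda>x. orbit \<tau> x) ` (A - Ob)"
    then obtain x where x: "x \<in> A - Ob" "Ob = orbit \<tau> x" by auto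
    have "orbit \<tau> x \<subseteq> A - Ob" using permutes_orbit_subset[OF tp x(1)] .
    with x aO show False by auto
  qed
qed

lemma support_orbit:
  assumes "\<sigma> permutes A" "finite A"
  shows "support \<sigma> a = a # tl (support \<sigma> a)" "distinct (support \<sigma> a)"
    "set (support \<sigma> a) = orbit \<sigma> a"
proof -
  have perm: "permutation \<sigma>" using assms permutation_permutes by blast
  have lp: "least_power \<sigma> a > 0" using least_power_of_permutation(2)[OF perm] .
  then have "[0..<least_power \<sigma> a] = 0 # [1..<least_power \<sigma> a]" by (simp add: upt_rec)
  then show "support \<sigma> a = a # tl (support \<sigma> a)" by simp
  show "distinct (support \<sigma> a)" by (rule cycle_of_permutation[OF perm])
  show "set (support \<sigma> a) = orbit \<sigma> a"
    unfolding support_set[OF perm] orbit_altdef_permutation[OF perm] by auto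
qed

lemma permutation_split_cycle:
  assumes "\<sigma> permutes A" "finite A"
  shows "\<sigma> = cycle_of_list (support \<sigma> a) \<circ> perm_restrict \<sigma> (A - orbit \<sigma> a)"
proof
  fix x
  have perm: "permutation \<sigma>" using assms permutation_permutes by blast
  have cyc: "cyclic_on \<sigma> (orbit \<sigma> a)" using assms by (rule cyclic_on_orbit)
  note S = support_orbit[OF assms, of a]
  show "\<sigma> x = (cycle_of_list (support \<sigma> a) \<circ> perm_restrict \<sigma> (A - orbit \<sigma> a)) x"
  proof (cases "x \<in> orbit \<sigma> a")
    case True
    then have "perm_restrict \<sigma> (A - orbit \<sigma> a) x = x" by (simp add: perm_restrict_simps)
    then show ?thesis using cycle_restrict[OF perm, of x a] True S(3) by simp
  next
    case False
    have "\<sigma> x \<notin> orbit \<sigma> a"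
    proof
      assume "\<sigma> x \<in> orbit \<sigma> a"
      then have "orbit \<sigma> (\<sigma> x) = orbit \<sigma> a" by (rule orbit_cyclic_eq3[OF cyc])
      then have "orbit \<sigma> x = orbit \<sigma> a" using permutation_orbit_step[OF perm] by simp
      then show False using False permutation_self_in_orbit[OF perm, of x] by simp
    qed
    moreover have "perm_restrict \<sigma> (A - orbit \<sigma> a) x = \<sigma> x"
      using False assms(1) by (cases "x \<in> A") (auto simp: perm_restrict_simps permutes_not_in)
    ultimately show ?thesis using id_outside_supp[of "\<sigma> x" "support \<sigma> a"] S(3) by simp
  qed
qed

lemma support_cycle_compose:
  assumes "distinct cs" "cs \<noteq> []" "\<tau> permutes B" "B \<inter> set cs = {}"
  shows "support (cycle_of_list cs \<circ> \<tau>) (hd cs) = cs"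
proof -
  let ?c = "cycle_of_list cs" let ?s = "?c \<circ> \<tau>"
  have fix\<tau>: "\<tau> y = y" if "y \<in> set cs" for y using assms(3,4) that by (meson disjoint_iff permutes_not_in)
  have cin: "?c y \<in> set cs" if "y \<in> set cs" for y
    using that by (simp add: permutes_in_image[OF cycle_permutes])
  have pw: "(?s ^^ n) (hd cs) = (?c ^^ n) (hd cs) \<and> (?c ^^ n) (hd cs) \<in> set cs" for n
  proof (induction n)
    case 0 then show ?case using assms(2) by simp
  next
    case (Suc n) then show ?case using fix\<tau> cin by simp
  qed
  have cn: "(?c ^^ n) (hd cs) = cs ! (n mod length cs)" for n
  proof -
    have "map (?c ^^ n) cs = rotate n cs" by (rule cyclic_rotation[OF assms(1)])
    then have "(?c ^^ n) (cs ! 0) = rotate n cs ! 0" using assms(2)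
      by (metis length_greater_0_conv nth_map)
    then show ?thesis using assms(2) by (simp add: nth_rotate hd_conv_nth)
  qed
  have sn: "(?s ^^ n) (hd cs) = cs ! (n mod length cs)" for n using pw cn by simp
  have lp: "least_power ?s (hd cs) = length cs"
    unfolding least_power_def
  proof (rule Least_equality)
    show "(?s ^^ length cs) (hd cs) = hd cs \<and> 0 < length cs" using sn assms(2) by (simp add: hd_conv_nth)
  next
    fix m assume m: "(?s ^^ m) (hd cs) = hd cs \<and> 0 < m"
    show "length cs \<le> m"
    proof (rule ccontr)
      assume "\<not> length cs \<le> m"
      then have "cs ! m = cs ! 0" using m sn[of m] assms(2) by (simp add: hd_conv_nth)
      then have "m = 0" using nth_eq_iff_index_eq[OF assms(1)] \<open>\<not> length cs \<le> m\<close> assms(2) by auto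
      then show False using m by simp
    qed
  qed
  show ?thesis unfolding lp sn
    by (rule nth_equalityI) auto
qed

lemma cycle_compose_permutes:
  assumes "distinct (a # xs)" "set (a # xs) \<subseteq> A" "\<tau> permutes (A - insert a (set xs))"
  shows "(cycle_of_list (a # xs) \<circ> \<tau>) permutes A"
proof (rule permutes_compose)
  show "\<tau> permutes A" using assms(3) by (rule permutes_subset) auto
  show "cycle_of_list (a # xs) permutes A" using cycle_permutes[of "a # xs"] assms(2)
    by (rule permutes_subset)
qed

lemma cycle_weight_split:
  assumes "\<sigma> permutes A" "finite A" "a \<in> A"
  shows "cycle_weight w \<sigma> A = w (card (orbit \<sigma> a)) * cycle_weight w (perm_restrict \<sigma> (A - orbit \<sigma> a)) (A - orbit \<sigma> a)"
  unfolding cycle_weight_def orbits_split_cycle(1)[OF assms]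
  by (rule prod.insert) (use orbits_split_cycle(2)[OF assms] assms(2) in auto)

lemma cycle_compose_decompose:
  assumes fin: "finite A" and a: "a \<in> A" and xs: "distinct xs" "set xs \<subseteq> A - {a}"
    and \<tau>: "\<tau> permutes (A - insert a (set xs))"
  defines "\<sigma> \<equiv> cycle_of_list (a # xs) \<circ> \<tau>"
  shows "\<sigma> permutes A" "support \<sigma> a = a # xs" "orbit \<sigma> a = insert a (set xs)"
    "perm_restrict \<sigma> (A - insert a (set xs)) = \<tau>"
proof -
  have dist: "distinct (a # xs)" and sub: "set (a # xs) \<subseteq> A" using xs a by auto
  show sp: "\<sigma> permutes A" unfolding \<sigma>_def by (rule cycle_compose_permutes[OF dist sub \<tau>])
  have "support \<sigma> (hd (a # xs)) = a # xs"
    unfolding \<sigma>_def by (rule support_cycle_compose[OF dist _ \<tau>]) auto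
  then show supp: "support \<sigma> a = a # xs" by simp
  show "orbit \<sigma> a = insert a (set xs)"
    using support_orbit(3)[OF sp fin, of a] supp by simp
  show "perm_restrict \<sigma> (A - insert a (set xs)) = \<tau>"
  proof
    fix x show "perm_restrict \<sigma> (A - insert a (set xs)) x = \<tau> x"
    proof (cases "x \<in> A - insert a (set xs)")
      case True
      then have "\<tau> x \<in> A - insert a (set xs)" using \<tau> by (simp only: permutes_in_image)
      then have "cycle_of_list (a # xs) (\<tau> x) = \<tau> x" by (intro id_outside_supp) auto
      then show ?thesis using True by (simp add: perm_restrict_simps \<sigma>_def)
    next
      case False then show ?thesis using \<tau> by (simp add: perm_restrict_simps permutes_not_in)
    qed
  qed
qed

lemma cycle_split_data:
  assumes sp: "\<sigma> permutes A" and fin: "finite A" and a: "a \<in> A"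
  defines "xs \<equiv> tl (support \<sigma> a)"
  shows "distinct xs" "set xs \<subseteq> A - {a}" "insert a (set xs) = orbit \<sigma> a"
    "card (orbit \<sigma> a) = Suc (length xs)"
proof -
  note S = support_orbit[OF sp fin, of a]
  show "distinct xs" unfolding xs_def using S(2) by (simp add: distinct_tl)
  show setO: "insert a (set xs) = orbit \<sigma> a" unfolding xs_def using S(1,3) by (metis list.simps(15))
  have "a \<notin> set xs" unfolding xs_def using S(2) by (subst (asm) S(1)) simp
  then show "set xs \<subseteq> A - {a}" using setO orbits_split_cycle(4)[OF sp fin a] by blast
  show "card (orbit \<sigma> a) = Suc (length xs)" unfolding xs_def using S by (metis distinct_card length_Cons)
qed

text \<open>The basic recursion: a permutation of \<open>A\<close> is a cycle through \<open>a\<close>, listed as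
  \<open>a # xs\<close>, composed with an arbitrary permutation of the complement.\<close>
lemma perm_weight_sum_rec:
  assumes fin: "finite A" and a: "a \<in> A"
  shows "perm_weight_sum w A = (\<Sum>xs\<in>{xs. distinct xs \<and> set xs \<subseteq> A - {a}}.
                      w (Suc (length xs)) * perm_weight_sum w (A - insert a (set xs)))"
proof -
  define L where "L = {xs. distinct xs \<and> set xs \<subseteq> A - {a}}"
  define T where "T = (SIGMA xs:L. {\<tau>. \<tau> permutes (A - insert a (set xs))})"
  define decomp where "decomp = (\<lambda>\<sigma>. (tl (support \<sigma> a), perm_restrict \<sigma> (A - orbit \<sigma> a)))"
  define recomp where "recomp = (\<lambda>(xs, \<tau>::'a\<Rightarrow>'a). cycle_of_list (a # xs) \<circ> \<tau>)"
  define h where "h = (\<lambda>(xs, \<tau>). w (Suc (length xs)) * cycle_weight w \<tau> (A - insert a (set xs)))"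
  have finL: "finite L" unfolding L_def
    using finite_subset_distinct[of "A - {a}"] fin by (simp add: conj_commute)
  have "perm_weight_sum w A = sum h T"
    unfolding perm_weight_sum_def
  proof (rule sum.reindex_bij_witness[of _ recomp decomp])
    fix \<sigma> assume "\<sigma> \<in> {\<sigma>. \<sigma> permutes A}"
    then have sp: "\<sigma> permutes A" by simp
    note D = cycle_split_data[OF sp fin a]
    show "recomp (decomp \<sigma>) = \<sigma>" unfolding recomp_def decomp_def
      using permutation_split_cycle[OF sp fin, of a] support_orbit(1)[OF sp fin, of a] by simp
    show "decomp \<sigma> \<in> T"
      using D(1,2) orbits_split_cycle(3)[OF sp fin a] unfolding decomp_def T_def L_def by (simp add: D(3))
    show "h (decomp \<sigma>) = cycle_weight w \<sigma> A"
      unfolding h_def decomp_def using cycle_weight_split[OF sp fin a, of w] D(3,4) by simp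
  next
    fix p assume "p \<in> T"
    then obtain xs \<tau> where p: "p = (xs, \<tau>)" "distinct xs" "set xs \<subseteq> A - {a}"
      "\<tau> permutes (A - insert a (set xs))" unfolding T_def L_def by auto
    note C = cycle_compose_decompose[OF fin a p(2,3,4)]
    show "recomp p \<in> {\<sigma>. \<sigma> permutes A}" unfolding recomp_def p using C(1) by simp
    show "decomp (recomp p) = p" unfolding decomp_def recomp_def p using C(2,3,4) by simp
  qed
  also have "\<dots> = (\<Sum>xs\<in>L. \<Sum>\<tau>\<in>{\<tau>. \<tau> permutes (A - insert a (set xs))}.
                    w (Suc (length xs)) * cycle_weight w \<tau> (A - insert a (set xs)))"
    unfolding T_def h_def
    by (rule sum.Sigma[symmetric]) (use finL fin finite_permutations in auto)
  also have "\<dots> = (\<Sum>xs\<in>L. w (Suc (length xs)) * perm_weight_sum w (A - insert a (set xs)))"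
    unfolding perm_weight_sum_def by (simp add: sum_distrib_left)
  finally show ?thesis unfolding L_def .
qed
lemma falling_fact_mult_fact:
  assumes "k \<le> m"
  shows "real (\<Prod>{m - k + 1..m}) * fact (m - k) = fact m"
proof -
  have "fact m = (fact (m - k) :: nat) * \<Prod>{Suc (m - k)..m}" by (rule fact_eq_fact_times) simp
  then have "(fact m :: real) = fact (m - k) * real (\<Prod>{m - k + 1..m})"
    by (metis of_nat_fact of_nat_mult Suc_eq_plus1)
  then show ?thesis by (simp add: mult.commute)
qed

lemma perm_weight_sum_empty: "perm_weight_sum w {} = 1"
  unfolding perm_weight_sum_def cycle_weight_def by simp

lemma sum_distinct_lists_by_length:
  assumes fin: "finite B"
  shows "(\<Sum>xs\<in>{xs. distinct xs \<and> set xs \<subseteq> B}. f (length xs))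
       = (\<Sum>k\<le>card B. real (\<Prod>{card B - k + 1..card B}) * f k)"
proof -
  define L where "L = {xs. distinct xs \<and> set xs \<subseteq> B}"
  have finL: "finite L" unfolding L_def
    using finite_subset_distinct[OF fin] by (simp add: conj_commute)
  have lenL: "length xs \<le> card B" if "xs \<in> L" for xs
    using that fin unfolding L_def by (metis card_mono distinct_card mem_Collect_eq)
  have "(\<Sum>xs\<in>L. f (length xs)) = (\<Sum>k\<le>card B. \<Sum>xs\<in>{xs\<in>L. length xs = k}. f (length xs))"
    by (rule sum.group[symmetric]) (use finL lenL in auto)
  also have "\<dots> = (\<Sum>k\<le>card B. real (card {xs\<in>L. length xs = k}) * f k)"
    by (rule sum.cong) simp_all
  also have "\<dots> = (\<Sum>k\<le>card B. real (\<Prod>{card B - k + 1..card B}) * f k)"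
  proof (rule sum.cong)
    fix k assume k: "k \<in> {..card B}"
    have "{xs\<in>L. length xs = k} = {xs. length xs = k \<and> distinct xs \<and> set xs \<subseteq> B}"
      unfolding L_def by auto
    then have "card {xs\<in>L. length xs = k} = \<Prod>{card B - k + 1..card B}"
      using card_lists_distinct_length_eq[OF fin, of k] k by simp
    then show "real (card {xs\<in>L. length xs = k}) * f k = real (\<Prod>{card B - k + 1..card B}) * f k"
      by simp
  qed simp
  finally show ?thesis unfolding L_def .
qed

lemma perm_weight_sum_eq_hrec:
  assumes "finite A"
  shows "perm_weight_sum w A = fact (card A) * hrec w (card A)"
  using assms
proof (induction "card A" arbitrary: A rule: less_induct)
  case less
  show ?case
  proof (cases "A = {}")
    case True then show ?thesis by (simp add: perm_weight_sum_empty)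
  next
    case False
    then obtain a where a: "a \<in> A" by auto
    define m where "m = card A - 1"
    have cA: "card A = Suc m" using False less.prems a m_def by (simp add: card_gt_0_iff)
    have cAa: "card (A - {a}) = m" using cA a less.prems by simp
    have IH: "perm_weight_sum w (A - insert a (set xs)) = fact (m - length xs) * hrec w (m - length xs)"
      if xs: "distinct xs" "set xs \<subseteq> A - {a}" for xs
    proof -
      have "card (A - insert a (set xs)) = card A - card (insert a (set xs))"
        using xs a less.prems by (intro card_Diff_subset) auto
      also have "card (insert a (set xs)) = Suc (length xs)"
        using xs by (subst card_insert_disjoint) (auto simp: distinct_card)
      finally have "card (A - insert a (set xs)) = m - length xs" using cA by simp
      then show ?thesis using less.hyps[of "A - insert a (set xs)"] cA less.prems by simp
    qed
    have "perm_weight_sum w A = (\<Sum>xs\<in>{xs. distinct xs \<and> set xs \<subseteq> A - {a}}.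
                      w (Suc (length xs)) * perm_weight_sum w (A - insert a (set xs)))"
      by (rule perm_weight_sum_rec[OF less.prems a])
    also have "\<dots> = (\<Sum>xs\<in>{xs. distinct xs \<and> set xs \<subseteq> A - {a}}.
                      w (Suc (length xs)) * (fact (m - length xs) * hrec w (m - length xs)))"
      by (rule sum.cong) (simp_all add: IH)
    also have "\<dots> = (\<Sum>k\<le>m. real (\<Prod>{m - k + 1..m}) * (w (Suc k) * (fact (m - k) * hrec w (m - k))))"
      using sum_distinct_lists_by_length[of "A - {a}" "\<lambda>k. w (Suc k) * (fact (m - k) * hrec w (m - k))"]
        less.prems cAa by simp
    also have "\<dots> = (\<Sum>k\<le>m. fact m * (w (Suc k) * hrec w (m - k)))"
      by (rule sum.cong) (use falling_fact_mult_fact[of _ m] in \<open>auto simp: algebra_simps\<close>)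
    also have "\<dots> = fact (Suc m) * hrec w (Suc m)"
      by (simp add: sum_distrib_left[symmetric] field_simps)
    finally show ?thesis using cA by simp
  qed
qed

lemma prod_cycle_count:
  assumes "\<sigma> permutes {1..n}"
  shows "(\<Prod>j\<in>{1..n}. \<theta> j ^ cycle_count n \<sigma> j) = cycle_weight \<theta> \<sigma> {1..n}"
proof -
  let ?S = "perm_cycles n \<sigma>"
  have finS: "finite ?S" unfolding perm_cycles_def by simp
  have cardS: "card C \<in> {1..n}" if CS: "C \<in> ?S" for C
  proof -
    obtain x where x: "x \<in> {1..n}" "C = orbit \<sigma> x" using CS unfolding perm_cycles_def image_iff by blast
    have sub: "C \<subseteq> {1..n}" using permutes_orbit_subset[OF assms x(1)] x(2) by simp
    have "C \<noteq> {}" using x(2) orbit_nonempty by simp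
    then have "card C \<ge> 1" using sub finite_subset by (metis One_nat_def Suc_leI card_gt_0_iff finite_atLeastAtMost)
    moreover have "card C \<le> n" using card_mono[OF _ sub] by simp
    ultimately show ?thesis by simp
  qed
  have "cycle_weight \<theta> \<sigma> {1..n} = (\<Prod>C\<in>?S. \<theta> (card C))" unfolding cycle_weight_def perm_cycles_def ..
  also have "\<dots> = (\<Prod>j\<in>{1..n}. \<Prod>C\<in>{C\<in>?S. card C = j}. \<theta> (card C))"
    by (rule prod.group[symmetric]) (use finS cardS in auto)
  also have "\<dots> = (\<Prod>j\<in>{1..n}. \<theta> j ^ cycle_count n \<sigma> j)"
  proof (rule prod.cong)
    fix j
    have "(\<Prod>C\<in>{C\<in>?S. card C = j}. \<theta> (card C)) = (\<Prod>C\<in>{C\<in>?S. card C = j}. \<theta> j)"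
      by (rule prod.cong) auto
    then show "(\<Prod>C\<in>{C\<in>?S. card C = j}. \<theta> (card C)) = \<theta> j ^ cycle_count n \<sigma> j"
      unfolding cycle_count_def by simp
  qed simp
  finally show ?thesis ..
qed

lemma hseq_eq_hrec: "hseq \<theta> n = hrec \<theta> n"
proof -
  have "hseq \<theta> n = (1 / fact n) * perm_weight_sum \<theta> {1..n}"
    unfolding hseq_def perm_weight_sum_def by (intro arg_cong[where f="\<lambda>x. 1 / fact n * x"] sum.cong refl prod_cycle_count) simp
  also have "\<dots> = hrec \<theta> n" using perm_weight_sum_eq_hrec[of "{1..n::nat}" \<theta>] by simp
  finally show ?thesis .
qed

section \<open>Properties of the recurrence and its generating function\<close>

lemma hrec_nonneg:
  assumes "\<And>j. j \<ge> 1 \<Longrightarrow> w j \<ge> 0"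
  shows "hrec w n \<ge> 0"
proof (induction n rule: less_induct)
  case (less n)
  show ?case
  proof (cases n)
    case 0 then show ?thesis by simp
  next
    case (Suc m)
    have "(\<Sum>k\<le>m. w (Suc k) * hrec w (m - k)) \<ge> 0"
      using assms less Suc by (intro sum_nonneg mult_nonneg_nonneg) auto
    then show ?thesis using Suc by simp
  qed
qed

lemma hrec_mono:
  assumes "\<And>j. j \<ge> 1 \<Longrightarrow> w j \<ge> 0" "\<And>j. j \<ge> 1 \<Longrightarrow> w j \<le> v j"
  shows "hrec w n \<le> hrec v n"
proof (induction n rule: less_induct)
  case (less n)
  show ?case
  proof (cases n)
    case 0 then show ?thesis by simp
  next
    case (Suc m)
    have "(\<Sum>k\<le>m. w (Suc k) * hrec w (m - k)) \<le> (\<Sum>k\<le>m. v (Suc k) * hrec v (m - k))"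
    proof (rule sum_mono)
      fix k assume "k \<in> {..m}"
      have "hrec w (m - k) \<le> hrec v (m - k)" using less Suc by simp
      moreover have "0 \<le> hrec w (m - k)" by (rule hrec_nonneg[OF assms(1)])
      moreover have "0 \<le> w (Suc k)" "w (Suc k) \<le> v (Suc k)" using assms by auto
      ultimately show "w (Suc k) * hrec w (m - k) \<le> v (Suc k) * hrec v (m - k)"
        by (meson mult_mono order_trans)
    qed
    then show ?thesis using Suc by (simp add: divide_right_mono)
  qed
qed

lemma pochhammer_hockey_stick:
  "(\<Sum>i\<le>n. pochhammer c i / fact i) = pochhammer (c + 1) n / (fact n :: real)"
proof (induction n)
  case 0 then show ?case by simp
next
  case (Suc n)
  have "(\<Sum>i\<le>Suc n. pochhammer c i / fact i) = pochhammer (c + 1) n / fact n + pochhammer c (Suc n) / fact (Suc n)"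
    using Suc by simp
  also have "\<dots> = pochhammer (c + 1) (Suc n) / (fact (Suc n) :: real)"
  proof -
    have key: "P / F + c * P / (F * (m + 1)) = P * (c + 1 + m) / (F * (m + 1))"
      if "F > 0" "m + 1 > 0" for P F m :: real
    proof -
      have "P * (c + 1 + m) = P * (m + 1) + c * P" by (simp add: algebra_simps)
      then have "P * (c + 1 + m) / (F * (m + 1)) = P * (m + 1) / (F * (m + 1)) + c * P / (F * (m + 1))"
        by (simp add: add_divide_distrib)
      moreover have "P * (m + 1) / (F * (m + 1)) = P / F" using that by simp
      ultimately show ?thesis by simp
    qed
    show ?thesis
      unfolding pochhammer_rec[of c n] pochhammer_Suc[of "c + 1" n] fact_Suc
      using key[of "fact n" "real n" "pochhammer (c + 1) n"] by (simp add: ac_simps)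
  qed
  finally show ?case .
qed

lemma hrec_const: "hrec (\<lambda>_. c) n = pochhammer c n / fact n"
proof (induction n rule: less_induct)
  case (less n)
  show ?case
  proof (cases n)
    case 0 then show ?thesis by simp
  next
    case (Suc m)
    have "(\<Sum>k\<le>m. c * hrec (\<lambda>_. c) (m - k)) = c * (\<Sum>k\<le>m. pochhammer c (m - k) / fact (m - k))"
      using less Suc by (simp add: sum_distrib_left)
    also have "(\<Sum>k\<le>m. pochhammer c (m - k) / fact (m - k)) = (\<Sum>k\<le>m. pochhammer c k / (fact k :: real))"
      by (rule sum.reindex_bij_witness[of _ "\<lambda>k. m - k" "\<lambda>k. m - k"]) auto
    also have "\<dots> = pochhammer (c + 1) m / fact m" by (rule pochhammer_hockey_stick)
    finally have "hrec (\<lambda>_. c) (Suc m) = c * (pochhammer (c + 1) m / fact m) / real (Suc m)" by simp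
    also have "\<dots> = pochhammer c (Suc m) / fact (Suc m)"
      by (simp add: pochhammer_rec field_simps)
    finally show ?thesis using Suc by simp
  qed
qed

lemma hrec_const_sums:
  assumes "\<bar>y\<bar> < 1"
  shows "(\<lambda>n. hrec (\<lambda>_. c) n * y ^ n) sums (1 - y) powr (- c)"
proof -
  have "(\<lambda>n. ((- c) gchoose n) * (- y) ^ n) sums (1 + - y) powr (- c)"
    using assms by (intro gen_binomial_real) simp
  moreover have "((- c) gchoose n) * (- y) ^ n = hrec (\<lambda>_. c) n * y ^ n" for n
    unfolding hrec_const gbinomial_pochhammer
    by (simp add: power_mult_distrib[symmetric] field_simps)
  ultimately show ?thesis by simp
qed

text \<open>By comparison with constant weights, \<open>\<Sum> h\<^sub>n x\<^sup>n\<close> converges absolutely for \<open>|x| < 1\<close>.\<close>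
lemma hrec_summable:
  assumes "\<And>j. j \<ge> 1 \<Longrightarrow> w j \<ge> 0" "\<And>j. j \<ge> 1 \<Longrightarrow> w j \<le> M" "\<bar>x\<bar> < 1"
  shows "summable (\<lambda>n. hrec w n * x ^ n)" "summable (\<lambda>n. norm (hrec w n * x ^ n))"
proof -
  have sM: "summable (\<lambda>n. hrec (\<lambda>_. M) n * \<bar>x\<bar> ^ n)"
    using hrec_const_sums[of "\<bar>x\<bar>" M] assms(3) by (simp add: sums_summable)
  have le: "norm (hrec w n * x ^ n) \<le> hrec (\<lambda>_. M) n * \<bar>x\<bar> ^ n" for n
  proof -
    have "norm (hrec w n * x ^ n) = hrec w n * \<bar>x\<bar> ^ n"
      using hrec_nonneg[OF assms(1)] by (simp add: abs_mult power_abs)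
    also have "\<dots> \<le> hrec (\<lambda>_. M) n * \<bar>x\<bar> ^ n"
      by (intro mult_right_mono hrec_mono) (use assms in auto)
    finally show ?thesis .
  qed
  show "summable (\<lambda>n. norm (hrec w n * x ^ n))"
    by (rule summable_comparison_test[OF _ sM]) (use le in auto)
  then show "summable (\<lambda>n. hrec w n * x ^ n)" by (rule summable_norm_cancel)
qed

lemma summable_bounded_coeffs:
  fixes c :: "nat \<Rightarrow> real"
  assumes "\<And>n. \<bar>c n\<bar> \<le> M" "\<bar>y\<bar> < 1"
  shows "summable (\<lambda>n. norm (c n * y ^ n))"
proof (rule summable_comparison_test[OF _ summable_mult[OF summable_geometric[of "\<bar>y\<bar>"], of M]])
  show "\<exists>N. \<forall>n\<ge>N. norm (norm (c n * y ^ n)) \<le> M * \<bar>y\<bar> ^ n"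
    using assms(1) by (auto simp: abs_mult power_abs intro!: mult_right_mono)
qed (use assms(2) in simp)

lemma powser_deriv_unit_disc:
  fixes c :: "nat \<Rightarrow> real"
  assumes "\<And>y. \<bar>y\<bar> < 1 \<Longrightarrow> summable (\<lambda>n. c n * y ^ n)" "\<bar>y\<bar> < 1"
  shows "DERIV (\<lambda>y. \<Sum>n. c n * y ^ n) y :> (\<Sum>n. diffs c n * y ^ n)"
proof -
  define K where "K = (1 + \<bar>y\<bar>) / 2"
  have K: "\<bar>K\<bar> < 1" "norm y < norm K" using assms(2) unfolding K_def by auto
  show ?thesis by (rule termdiffs_strong[OF assms(1)[OF K(1)] K(2)])
qed

text \<open>The recurrence says exactly that the derivative series of \<open>\<Sum> h\<^sub>n x\<^sup>n\<close> is the Cauchy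
  product of \<open>\<Sum> w\<^sub>n\<^sub>+\<^sub>1 x\<^sup>n\<close> with \<open>\<Sum> h\<^sub>n x\<^sup>n\<close>.\<close>
lemma hrec_diffs_product:
  assumes w0: "\<And>j. j \<ge> 1 \<Longrightarrow> w j \<ge> 0" and wM: "\<And>j. j \<ge> 1 \<Longrightarrow> w j \<le> M" and y: "\<bar>y\<bar> < 1"
  shows "(\<Sum>n. diffs (hrec w) n * y ^ n) = (\<Sum>n. w (Suc n) * y ^ n) * (\<Sum>n. hrec w n * y ^ n)"
proof -
  have D_sum: "summable (\<lambda>n. norm (w (Suc n) * y ^ n))"
    using w0 wM by (intro summable_bounded_coeffs[OF _ y, of _ M]) simp
  have "(\<Sum>n. w (Suc n) * y ^ n) * (\<Sum>n. hrec w n * y ^ n)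
      = (\<Sum>n. \<Sum>i\<le>n. (w (Suc i) * y ^ i) * (hrec w (n - i) * y ^ (n - i)))"
    by (rule Cauchy_product[OF D_sum hrec_summable(2)[OF w0 wM y]])
  also have "\<dots> = (\<Sum>n. diffs (hrec w) n * y ^ n)"
  proof (rule suminf_cong)
    fix n
    have eq: "(w (Suc i) * y ^ i) * (hrec w (n - i) * y ^ (n - i)) = w (Suc i) * hrec w (n - i) * y ^ n"
      if "i \<in> {..n}" for i
    proof -
      have "y ^ i * y ^ (n - i) = y ^ n" using that by (simp add: power_add[symmetric])
      then show ?thesis by (metis mult.assoc mult.left_commute)
    qed
    show "(\<Sum>i\<le>n. (w (Suc i) * y ^ i) * (hrec w (n - i) * y ^ (n - i))) = diffs (hrec w) n * y ^ n"
    proof -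
      have "(\<Sum>i\<le>n. (w (Suc i) * y ^ i) * (hrec w (n - i) * y ^ (n - i)))
          = (\<Sum>k\<le>n. w (Suc k) * hrec w (n - k)) * y ^ n"
        unfolding sum_distrib_right by (rule sum.cong[OF refl eq])
      then show ?thesis by (simp add: diffs_def)
    qed
  qed
  finally show ?thesis ..
qed

lemma integrating_factor_const:
  fixes F S D :: "real \<Rightarrow> real"
  assumes dF: "\<And>y. \<bar>y\<bar> < 1 \<Longrightarrow> DERIV F y :> D y * F y"
    and dS: "\<And>y. \<bar>y\<bar> < 1 \<Longrightarrow> DERIV S y :> D y" and x: "\<bar>x\<bar> < 1"
  shows "F x * exp (- S x) = F 0 * exp (- S 0)"
proof -
  define G where "G y = F y * exp (- S y)" for y
  have dG: "(G has_field_derivative 0) (at y within {-1<..<1})" if "y \<in> {-1<..<1}" for y :: real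
  proof -
    have y: "\<bar>y\<bar> < 1" using that by auto
    have "(G has_field_derivative (D y * F y * exp (- S y) + exp (- S y) * - D y * F y)) (at y)"
      unfolding G_def by (rule DERIV_mult[OF dF[OF y] DERIV_fun_exp[OF DERIV_minus[OF dS[OF y]]]])
    then have "(G has_field_derivative 0) (at y)" by (simp add: algebra_simps)
    then show ?thesis by (rule has_field_derivative_at_within)
  qed
  obtain k where k: "\<And>y. y \<in> {-1<..<1::real} \<Longrightarrow> G y = k"
    using has_field_derivative_zero_constant[OF convex_real_interval(8) dG] by blast
  have "x \<in> {-1<..<1}" using x by (simp add: abs_less_iff)
  then show ?thesis using k[of 0] k[of x] unfolding G_def by simp
qed

text \<open>The exponential formula: \<open>F = \<Sum> h\<^sub>n x\<^sup>n\<close> solves \<open>F' = S' F\<close>, \<open>F(0) = 1\<close>, where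
  \<open>S = \<Sum> w\<^sub>j x\<^sup>j / j\<close>; hence \<open>F = exp S\<close> on \<open>]-1,1[\<close>.\<close>
lemma hrec_gf:
  assumes w0: "\<And>j. j \<ge> 1 \<Longrightarrow> w j \<ge> 0" and wM: "\<And>j. j \<ge> 1 \<Longrightarrow> w j \<le> M"
    and x: "\<bar>x\<bar> < 1"
  shows "(\<Sum>n. hrec w n * x ^ n) = exp (\<Sum>j. w (Suc j) / real (Suc j) * x ^ Suc j)"
proof -
  define c where "c j = (if j = 0 then 0 else w j / real j)" for j
  define F where "F y = (\<Sum>n. hrec w n * y ^ n)" for y :: real
  define S where "S y = (\<Sum>j. c j * y ^ j)" for y :: real
  define D where "D y = (\<Sum>n. w (Suc n) * y ^ n)" for y :: real
  have cb: "\<bar>c j\<bar> \<le> M" for j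
  proof (cases "j = 0")
    case True then show ?thesis using w0[of 1] wM[of 1] by (simp add: c_def)
  next
    case False
    then have "\<bar>c j\<bar> = w j / real j" using w0[of j] by (simp add: c_def)
    also have "\<dots> \<le> w j" using w0[of j] False by (simp add: divide_le_eq mult_le_cancel_left1)
    also have "\<dots> \<le> M" using wM[of j] False by simp
    finally show ?thesis .
  qed
  have c_sum: "summable (\<lambda>n. c n * y ^ n)" if "\<bar>y\<bar> < 1" for y :: real
    using summable_bounded_coeffs[OF cb that] by (rule summable_norm_cancel)
  have dS: "DERIV S y :> D y" if y: "\<bar>y\<bar> < 1" for y :: real
  proof -
    have "diffs c n = w (Suc n)" for n by (simp add: diffs_def c_def)
    then show ?thesis using powser_deriv_unit_disc[OF c_sum y] unfolding S_def D_def by simp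
  qed
  have dF: "DERIV F y :> D y * F y" if y: "\<bar>y\<bar> < 1" for y :: real
  proof -
    have "summable (\<lambda>n. hrec w n * z ^ n)" if "\<bar>z\<bar> < 1" for z
      by (rule hrec_summable(1)[OF w0 wM that])
    then have "DERIV F y :> (\<Sum>n. diffs (hrec w) n * y ^ n)"
      unfolding F_def using powser_deriv_unit_disc y by blast
    then show ?thesis using hrec_diffs_product[OF w0 wM y] unfolding F_def D_def by simp
  qed
  have "F 0 = 1" "S 0 = 0" unfolding F_def S_def using powser_zero[of "hrec w"] powser_zero[of c]
    by (simp_all add: c_def)
  then have Fx: "F x = exp (S x)"
    using integrating_factor_const[OF dF dS x] by (simp add: exp_minus field_simps)
  have "(\<Sum>j. c (Suc j) * x ^ Suc j) = (\<Sum>j. c j * x ^ j) - c 0 * x ^ 0"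
    by (rule suminf_split_head[OF c_sum[OF x]])
  then have "(\<Sum>j. w (Suc j) / real (Suc j) * x ^ Suc j) = S x" unfolding S_def by (simp add: c_def)
  then show ?thesis using Fx unfolding F_def by simp
qed

lemma ln_one_minus_sums:
  fixes t :: real assumes "\<bar>t\<bar> < 1"
  shows "(\<lambda>j. t ^ Suc j / real (Suc j)) sums (- ln (1 - t))"
proof -
  have "(\<lambda>n. - ((- (- t)) ^ n) / of_nat n) sums ln (1 + - t)"
    using assms by (intro ln_series') simp
  then have "(\<lambda>n. - (t ^ n) / real n) sums ln (1 - t)" by simp
  then have "(\<lambda>n. - (t ^ Suc n) / real (Suc n)) sums ln (1 - t)" by (subst sums_Suc_iff) simp
  then show ?thesis using sums_minus by fastforce
qed

definition Lambda_log :: "(nat \<Rightarrow> real) \<Rightarrow> real \<Rightarrow> real \<Rightarrow> real" where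
  "Lambda_log w th t = (\<Sum>j. (w (Suc j) - th) / real (Suc j) * t ^ Suc j)"

lemma Lambda_eq_exp_Lambda_log: "Lambda \<theta> th x = exp (Lambda_log \<theta> th (1 - 1 / x))"
  unfolding Lambda_def Lambda_log_def ..

lemma Lambda_log_const: "Lambda_log (\<lambda>_. th) th t = 0"
  unfolding Lambda_log_def by simp

lemma Lambda_log_sums:
  assumes C: "\<And>j. j \<ge> 1 \<Longrightarrow> \<bar>w j - th\<bar> \<le> C" and t: "\<bar>t\<bar> < 1"
  shows "(\<lambda>j. (w (Suc j) - th) / real (Suc j) * t ^ Suc j) sums Lambda_log w th t"
    "summable (\<lambda>j. norm ((w (Suc j) - th) / real (Suc j) * t ^ Suc j))"
proof -
  have coeff: "\<bar>(w (Suc j) - th) / real (Suc j) * t\<bar> \<le> C" for j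
  proof -
    have "\<bar>w (Suc j) - th\<bar> / real (Suc j) \<le> \<bar>w (Suc j) - th\<bar>"
      by (simp add: divide_le_eq mult_le_cancel_left1)
    also have "\<dots> \<le> C" using C[of "Suc j"] by simp
    finally have "\<bar>(w (Suc j) - th) / real (Suc j)\<bar> * \<bar>t\<bar> \<le> C * 1"
      using t C[of 1] by (intro mult_mono) auto
    then show ?thesis by (simp add: abs_mult)
  qed
  have s: "summable (\<lambda>j. norm ((w (Suc j) - th) / real (Suc j) * t * t ^ j))"
    by (rule summable_bounded_coeffs[OF coeff t])
  show sn: "summable (\<lambda>j. norm ((w (Suc j) - th) / real (Suc j) * t ^ Suc j))"
    using s by (simp add: mult_ac)
  show "(\<lambda>j. (w (Suc j) - th) / real (Suc j) * t ^ Suc j) sums Lambda_log w th t"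
    unfolding Lambda_log_def using summable_norm_cancel[OF sn] by (simp add: summable_sums)
qed

text \<open>Factorisation of the generating function into the singular part \<open>(1-t)\<^sup>-\<^sup>\<theta>\<close>
  and the slowly varying part \<open>exp \<Phi>(t)\<close>.\<close>
lemma hrec_gf_factor:
  assumes w0: "\<And>j. j \<ge> 1 \<Longrightarrow> w j \<ge> 0" and wM: "\<And>j. j \<ge> 1 \<Longrightarrow> w j \<le> M"
    and t: "0 \<le> t" "t < 1" and th: "th \<ge> 0"
  shows "(\<Sum>n. hrec w n * t ^ n) = (1 - t) powr (- th) * exp (Lambda_log w th t)"
proof -
  have t1: "\<bar>t\<bar> < 1" using t by simp
  have b: "\<bar>w j - th\<bar> \<le> M + th" if "j \<ge> 1" for j using w0[OF that] wM[OF that] th by auto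
  have s1: "(\<lambda>j. (w (Suc j) - th) / real (Suc j) * t ^ Suc j) sums Lambda_log w th t"
    using Lambda_log_sums(1)[OF b t1] .
  have s2: "(\<lambda>j. th * (t ^ Suc j / real (Suc j))) sums (th * - ln (1 - t))"
    using ln_one_minus_sums[OF t1] by (rule sums_mult)
  have "(\<lambda>j. (w (Suc j) - th) / real (Suc j) * t ^ Suc j + th * (t ^ Suc j / real (Suc j)))
          sums (Lambda_log w th t + th * - ln (1 - t))"
    by (rule sums_add[OF s1 s2])
  moreover have "(w (Suc j) - th) / real (Suc j) * t ^ Suc j + th * (t ^ Suc j / real (Suc j))
      = w (Suc j) / real (Suc j) * t ^ Suc j" for j
  proof -
    have "(a - b) / s * T + b * (T / s) = a / s * T" if "s > 0" for a b T s :: real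
      using that by (simp add: field_simps)
    then show ?thesis by simp
  qed
  ultimately have "(\<Sum>j. w (Suc j) / real (Suc j) * t ^ Suc j) = Lambda_log w th t + th * - ln (1 - t)"
    by (simp add: sums_iff)
  then have "(\<Sum>n. hrec w n * t ^ n) = exp (Lambda_log w th t) * exp (- th * ln (1 - t))"
    using hrec_gf[OF w0 wM t1] by (simp add: exp_add[symmetric])
  also have "exp (- th * ln (1 - t)) = (1 - t) powr (- th)" using t by (simp add: powr_def)
  finally show ?thesis by simp
qed

definition hpsum :: "(nat \<Rightarrow> real) \<Rightarrow> nat \<Rightarrow> real" where
  "hpsum w N = (\<Sum>n\<le>N. hrec w n)"

lemma hrec_convolution:
  assumes "N \<ge> 1"
  shows "real N * hrec w N = (\<Sum>j<N. w (N - j) * hrec w j)"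
proof -
  obtain m where N: "N = Suc m" using assms by (cases N) auto
  have "real N * hrec w N = (\<Sum>k\<le>m. w (Suc k) * hrec w (m - k))" unfolding N by simp
  also have "\<dots> = (\<Sum>j\<le>m. w (Suc (m - j)) * hrec w j)"
    by (rule sum.reindex_bij_witness[of _ "\<lambda>k. m - k" "\<lambda>k. m - k"]) auto
  also have "\<dots> = (\<Sum>j<N. w (N - j) * hrec w j)" unfolding N
    by (rule sum.cong) (auto simp: Suc_diff_le)
  finally show ?thesis .
qed

lemma hpsum_mono:
  assumes "\<And>j. j \<ge> 1 \<Longrightarrow> w j \<ge> 0" "m \<le> n"
  shows "hpsum w m \<le> hpsum w n"
  unfolding hpsum_def using assms by (intro sum_mono2) (auto intro: hrec_nonneg)

lemma hpsum_ge_1: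
  assumes "\<And>j. j \<ge> 1 \<Longrightarrow> w j \<ge> 0"
  shows "hpsum w N \<ge> 1"
  using hpsum_mono[of w 0 N, OF assms] by (simp add: hpsum_def)

lemma hrec_le_hpsum:
  assumes w0: "\<And>j. j \<ge> 1 \<Longrightarrow> w j \<ge> 0" and wM: "\<And>j. j \<ge> 1 \<Longrightarrow> w j \<le> M"
    and j: "1 \<le> j" "j \<le> N"
  shows "hrec w j \<le> M * hpsum w N / real j"
proof -
  obtain m where jm: "j = Suc m" using j by (cases j) auto
  have M0: "M \<ge> 0" using w0[of 1] wM[of 1] by simp
  have "hrec w j * real j = (\<Sum>k\<le>m. w (Suc k) * hrec w (m - k))" unfolding jm by simp
  also have "\<dots> \<le> (\<Sum>k\<le>m. M * hrec w (m - k))"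
    by (intro sum_mono mult_right_mono wM hrec_nonneg[OF w0]) auto
  also have "\<dots> = M * hpsum w m"
  proof -
    have "(\<Sum>k\<le>m. hrec w (m - k)) = (\<Sum>k\<le>m. hrec w k)"
      by (rule sum.reindex_bij_witness[of _ "\<lambda>k. m - k" "\<lambda>k. m - k"]) auto
    then show ?thesis unfolding hpsum_def by (simp add: sum_distrib_left[symmetric])
  qed
  also have "\<dots> \<le> M * hpsum w N"
  proof -
    have "m \<le> N" using j jm by linarith
    then show ?thesis using hpsum_mono[of w m N, OF w0] M0 by (simp add: mult_left_mono)
  qed
  finally have "hrec w j * real j \<le> M * hpsum w N" .
  then show ?thesis using j by (simp add: pos_le_divide_eq)
qed

lemma hpsum_const: "hpsum (\<lambda>_. th) N = pochhammer (th + 1) N / fact N"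
  unfolding hpsum_def hrec_const by (rule pochhammer_hockey_stick)

text \<open>Via the Gauss product \<open>\<Gamma>(\<theta>+1) = lim N! N\<^sup>\<theta>\<^sup>+\<^sup>1 / (\<theta>+1)\<^sub>N\<^sub>+\<^sub>1\<close>.\<close>
lemma hpsum_const_asymp:
  assumes th: "th > 0"
  shows "(\<lambda>N. hpsum (\<lambda>_. th) N / real N powr th) \<longlonglongrightarrow> 1 / Gamma (th + 1)"
proof -
  have G: "Gamma_series (th + 1) \<longlonglongrightarrow> Gamma (th + 1)" by (rule Gamma_series_LIMSEQ)
  have Gpos: "Gamma (th + 1) > 0" using th by (intro Gamma_real_pos) simp
  have l1: "(\<lambda>N. real N / (th + 1 + real N)) \<longlonglongrightarrow> 1" using th by real_asymp
  have lim: "(\<lambda>N. real N / (th + 1 + real N) / Gamma_series (th + 1) N) \<longlonglongrightarrow> 1 / Gamma (th + 1)"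
    by (rule tendsto_divide[OF l1 G]) (use Gpos in simp)
  have "\<forall>\<^sub>F N in sequentially.
      real N / (th + 1 + real N) / Gamma_series (th + 1) N = hpsum (\<lambda>_. th) N / real N powr th"
  proof (rule eventually_sequentiallyI[of 1])
    fix N :: nat assume N: "N \<ge> 1"
    have Np: "real N > 0" using N by simp
    have pp: "pochhammer (th + 1) N > 0" using th by (intro pochhammer_pos) simp
    have "real N powr (th + 1) = exp ((th + 1) * ln (real N))" using Np by (simp add: powr_def)
    moreover have "real N powr (th + 1) = real N powr th * real N" using Np by (simp add: powr_add)
    ultimately have e: "exp ((th + 1) * ln (real N)) = real N powr th * real N" by simp
    have "Gamma_series (th + 1) N
        = fact N * (real N powr th * real N) / (pochhammer (th + 1) N * (th + 1 + real N))"
      unfolding Gamma_series_def using e by (simp add: pochhammer_Suc add_ac)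
    moreover have "n / a / (F * (X * n) / (P * a)) = P / F / X"
      if "n > 0" "a > 0" "F > 0" "X > 0" "P > 0" for n a F X P :: real
      using that by (simp add: field_simps)
    ultimately show "real N / (th + 1 + real N) / Gamma_series (th + 1) N = hpsum (\<lambda>_. th) N / real N powr th"
      unfolding hpsum_const using Np pp th by simp
  qed
  then show ?thesis by (rule Lim_transform_eventually[OF lim])
qed

definition window :: "nat \<Rightarrow> real \<Rightarrow> nat set" where
  "window N \<delta> = {n. real N * (1 - \<delta>) < real n \<and> real n < real N * (1 + \<delta>)}"

lemma card_nat_between:
  fixes u v :: real assumes "0 \<le> u" "u < v"
  shows "real (card {n::nat. u < real n \<and> real n < v}) \<le> v - u + 1"
proof -
  have sub: "{n::nat. u < real n \<and> real n < v} \<subseteq> {nat \<lfloor>u\<rfloor> + 1 .. nat \<lfloor>v\<rfloor>}"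
  proof
    fix n assume n: "n \<in> {n::nat. u < real n \<and> real n < v}"
    then have "\<lfloor>u\<rfloor> < int n" by (simp add: floor_less_iff)
    then have "nat \<lfloor>u\<rfloor> < n" using assms(1) by (simp add: nat_less_iff)
    moreover have "int n \<le> \<lfloor>v\<rfloor>" using n by (simp add: le_floor_iff)
    ultimately show "n \<in> {nat \<lfloor>u\<rfloor> + 1 .. nat \<lfloor>v\<rfloor>}" by auto
  qed
  have "card {n::nat. u < real n \<and> real n < v} \<le> card {nat \<lfloor>u\<rfloor> + 1 .. nat \<lfloor>v\<rfloor>}"
    by (rule card_mono[OF _ sub]) simp
  also have "\<dots> = nat \<lfloor>v\<rfloor> - nat \<lfloor>u\<rfloor>" by simp
  finally have "real (card {n::nat. u < real n \<and> real n < v}) \<le> real (nat \<lfloor>v\<rfloor> - nat \<lfloor>u\<rfloor>)"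
    by linarith
  moreover have "nat \<lfloor>u\<rfloor> \<le> nat \<lfloor>v\<rfloor>" using assms by (simp add: floor_mono nat_mono)
  ultimately show ?thesis using assms by simp linarith
qed

lemma window_subset:
  assumes "\<delta> \<le> 1/2"
  shows "window N \<delta> \<subseteq> {n. real N / 2 < real n \<and> n \<le> 2 * N}"
proof -
  have "real N * (1/2) \<le> real N * (1 - \<delta>)" "real N * (1 + \<delta>) \<le> real N * 2"
    using assms by (intro mult_left_mono; simp)+
  then have lo: "real N / 2 \<le> real N * (1 - \<delta>)" and hi: "real N * (1 + \<delta>) \<le> real (2 * N)"
    by simp_all
  show ?thesis
  proof
    fix n assume "n \<in> window N \<delta>"
    then have n: "real N * (1 - \<delta>) < real n" "real n < real N * (1 + \<delta>)" unfolding window_def by auto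
    have "real N / 2 < real n" using n(1) lo by linarith
    moreover have "real n < real (2 * N)" using n(2) hi by linarith
    ultimately show "n \<in> {n. real N / 2 < real n \<and> n \<le> 2 * N}" by (simp only: of_nat_less_iff) simp
  qed
qed

lemma card_window:
  assumes "0 < \<delta>" "\<delta> \<le> 1/2" "N > 0"
  shows "real (card (window N \<delta>)) \<le> 2 * \<delta> * real N + 1"
  using card_nat_between[of "real N * (1 - \<delta>)" "real N * (1 + \<delta>)"] assms
  unfolding window_def by (simp add: algebra_simps)

text \<open>Since each \<open>h\<^sub>n\<close> is at most \<open>M/n\<close> times a partial sum, a window of relative
  width \<open>\<delta>\<close> carries at most a fraction \<open>O(\<delta> + 1/N)\<close> of \<open>\<Sum>\<^sub>n\<^sub>\<le>\<^sub>2\<^sub>N h\<^sub>n\<close>.\<close>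
lemma window_sum_bound:
  assumes w0: "\<And>j. j \<ge> 1 \<Longrightarrow> w j \<ge> 0" and wM: "\<And>j. j \<ge> 1 \<Longrightarrow> w j \<le> M"
    and \<delta>: "0 < \<delta>" "\<delta> \<le> 1/2" and N: "N > 0"
  shows "(\<Sum>n\<in>window N \<delta>. hrec w n) \<le> 4 * M * (\<delta> + 1 / real N) * hpsum w (2 * N)"
proof -
  have M0: "M \<ge> 0" using w0[of 1] wM[of 1] by simp
  have Np: "real N > 0" using N by simp
  have H1: "hpsum w (2 * N) \<ge> 1" by (rule hpsum_ge_1[OF w0])
  define Y where "Y = 2 * M * hpsum w (2 * N) / real N"
  have Y0: "Y \<ge> 0" unfolding Y_def using M0 H1 by simp
  have each: "hrec w n \<le> Y" if "n \<in> window N \<delta>" for n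
  proof -
    have n: "real N / 2 < real n" "n \<le> 2 * N" using window_subset[OF \<delta>(2)] that by auto
    then have "n \<ge> 1" using Np by (cases n) auto
    then have "hrec w n \<le> M * hpsum w (2 * N) / real n"
      using hrec_le_hpsum[of w M n "2 * N", OF w0 wM] n(2) by simp
    also have "\<dots> \<le> M * hpsum w (2 * N) / (real N / 2)"
      using n Np M0 H1 by (intro divide_left_mono) auto
    finally show ?thesis unfolding Y_def by (simp add: field_simps)
  qed
  have fin: "finite (window N \<delta>)"
    by (rule finite_subset[OF window_subset[OF \<delta>(2)]]) auto
  have "(\<Sum>n\<in>window N \<delta>. hrec w n) \<le> real (card (window N \<delta>)) * Y"
    using sum_mono[of "window N \<delta>" "hrec w" "\<lambda>_. Y"] each by simp
  also have "\<dots> \<le> (2 * \<delta> * real N + 1) * Y"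
    by (rule mult_right_mono[OF card_window[OF \<delta> N] Y0])
  also have "\<dots> = 4 * M * \<delta> * hpsum w (2 * N) + 2 * (M * hpsum w (2 * N) / real N)"
    unfolding Y_def using Np by (simp add: field_simps)
  also have "\<dots> \<le> 4 * M * \<delta> * hpsum w (2 * N) + 4 * (M * hpsum w (2 * N) / real N)"
    using M0 H1 Np by (intro add_left_mono mult_right_mono divide_right_mono) auto
  also have "\<dots> = 4 * M * (\<delta> + 1 / real N) * hpsum w (2 * N)"
    by (simp add: algebra_simps)
  finally show ?thesis .
qed

lemma const_window_bound:
  assumes th: "th > 0"
  obtains K where "\<forall>\<^sub>F N in sequentially. \<forall>\<delta>. 0 < \<delta> \<and> \<delta> \<le> 1/2 \<longrightarrow>
     (\<Sum>n\<in>window N \<delta>. hrec (\<lambda>_. th) n) \<le> K * (\<delta> + 1 / real N) * real N powr th"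
proof -
  define c where "c = 1 / Gamma (th + 1)"
  have "(\<lambda>N. hpsum (\<lambda>_. th) (2 * N) / real (2 * N) powr th) \<longlonglongrightarrow> c"
    using LIMSEQ_subseq_LIMSEQ[OF hpsum_const_asymp[OF th], of "\<lambda>N. 2 * N"] unfolding c_def
    by (simp add: o_def strict_mono_def)
  then have ev: "\<forall>\<^sub>F N in sequentially. hpsum (\<lambda>_. th) (2 * N) / real (2 * N) powr th < c + 1"
    by (rule order_tendstoD) simp
  have "\<forall>\<^sub>F N in sequentially. \<forall>\<delta>. 0 < \<delta> \<and> \<delta> \<le> 1/2 \<longrightarrow>
     (\<Sum>n\<in>window N \<delta>. hrec (\<lambda>_. th) n) \<le> (4 * th * (c + 1) * 2 powr th) * (\<delta> + 1 / real N) * real N powr th"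
    using ev eventually_gt_at_top[of 0]
  proof eventually_elim
    case (elim N)
    have pos: "real (2 * N) powr th > 0" using elim(2) by simp
    have "hpsum (\<lambda>_. th) (2 * N) < (c + 1) * real (2 * N) powr th"
      using elim(1) pos by (simp add: divide_less_eq)
    moreover have "real (2 * N) powr th = 2 powr th * real N powr th" by (simp add: powr_mult)
    ultimately have B2: "hpsum (\<lambda>_. th) (2 * N) \<le> (c + 1) * 2 powr th * real N powr th"
      by (simp add: mult.assoc)
    show ?case
    proof (intro allI impI)
      fix \<delta> :: real assume \<delta>: "0 < \<delta> \<and> \<delta> \<le> 1/2"
      have "(\<Sum>n\<in>window N \<delta>. hrec (\<lambda>_. th) n) \<le> 4 * th * (\<delta> + 1 / real N) * hpsum (\<lambda>_. th) (2 * N)"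
        using window_sum_bound[of "\<lambda>_. th" th \<delta> N] th \<delta> elim(2) by simp
      also have "\<dots> \<le> 4 * th * (\<delta> + 1 / real N) * ((c + 1) * 2 powr th * real N powr th)"
        using th \<delta> B2 by (intro mult_left_mono) auto
      also have "\<dots> = (4 * th * (c + 1) * 2 powr th) * (\<delta> + 1 / real N) * real N powr th"
        by (simp only: ac_simps)
      finally show "(\<Sum>n\<in>window N \<delta>. hrec (\<lambda>_. th) n)
          \<le> (4 * th * (c + 1) * 2 powr th) * (\<delta> + 1 / real N) * real N powr th" .
    qed
  qed
  then show ?thesis by (rule that)
qed

section \<open>Slow variation of \<open>\<Phi>\<close> and the Laplace transform of \<open>h\<close>\<close>

lemma ln_ratio_sums:
  fixes a b :: real assumes "0 \<le> a" "a \<le> b" "b < 1"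
  shows "(\<lambda>j. (b ^ Suc j - a ^ Suc j) / real (Suc j)) sums (ln ((1 - a) / (1 - b)))"
proof -
  have "(\<lambda>j. b ^ Suc j / real (Suc j) - a ^ Suc j / real (Suc j)) sums (- ln (1 - b) - - ln (1 - a))"
    using assms by (intro sums_diff ln_one_minus_sums) auto
  moreover have "- ln (1 - b) - - ln (1 - a) = ln ((1 - a) / (1 - b))"
    using assms by (simp add: ln_div)
  ultimately show ?thesis by (simp add: diff_divide_distrib)
qed

lemma abs_power_diff_min_max:
  fixes u v :: real assumes "0 \<le> u" "0 \<le> v"
  shows "\<bar>u ^ n - v ^ n\<bar> = max u v ^ n - min u v ^ n"
proof (cases "u \<le> v")
  case True
  then have "u ^ n \<le> v ^ n" using assms by (intro power_mono) auto
  then show ?thesis using True by (simp add: min_def max_def)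
next
  case False
  then have "v ^ n \<le> u ^ n" using assms by (intro power_mono) auto
  then show ?thesis using False by (simp add: min_def max_def)
qed

text \<open>Splitting \<open>\<Phi>(u) - \<Phi>(v)\<close> at an index \<open>J\<close> beyond which \<open>|w\<^sub>j - \<theta>| < e\<close>: the tail
  is dominated by \<open>e \<Sum> (b\<^sup>j - a\<^sup>j)/j = e ln ((1-a)/(1-b))\<close>.\<close>
lemma Lambda_log_diff_bound:
  assumes C: "\<And>j. j \<ge> 1 \<Longrightarrow> \<bar>w j - th\<bar> \<le> C" and J: "\<And>j. j \<ge> J \<Longrightarrow> \<bar>w j - th\<bar> < e"
    and u: "0 \<le> u" "u < 1" and v: "0 \<le> v" "v < 1"
  shows "\<bar>Lambda_log w th u - Lambda_log w th v\<bar>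
    \<le> (\<Sum>j<J. \<bar>(w (Suc j) - th) / real (Suc j)\<bar> * \<bar>u ^ Suc j - v ^ Suc j\<bar>)
       + e * ln ((1 - min u v) / (1 - max u v))"
proof -
  define c where "c j = (w (Suc j) - th) / real (Suc j)" for j
  define a where "a = min u v"
  define b where "b = max u v"
  have ab: "0 \<le> a" "a \<le> b" "b < 1" unfolding a_def b_def using u v by auto
  have e0: "e \<ge> 0" using J[of J] by simp
  have u1: "\<bar>u\<bar> < 1" and v1: "\<bar>v\<bar> < 1" using u v by auto
  note su = Lambda_log_sums[of w th C u, OF C u1, folded c_def]
    and sv = Lambda_log_sums[of w th C v, OF C v1, folded c_def]
  define f where "f j = c j * (u ^ Suc j - v ^ Suc j)" for j
  have sf: "f sums (Lambda_log w th u - Lambda_log w th v)"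
    using sums_diff[OF su(1) sv(1)] unfolding f_def by (simp add: algebra_simps)
  have nsf: "summable (\<lambda>j. norm (f j))"
  proof (rule summable_comparison_test[OF _ summable_add[OF su(2) sv(2)]])
    show "\<exists>N'. \<forall>n\<ge>N'. norm (norm (f n)) \<le> norm (c n * u ^ Suc n) + norm (c n * v ^ Suc n)"
      unfolding f_def by (auto simp: right_diff_distrib abs_triangle_ineq4)
  qed
  define d where "d j = (b ^ Suc j - a ^ Suc j) / real (Suc j)" for j
  have sd: "d sums ln ((1 - a) / (1 - b))" unfolding d_def by (rule ln_ratio_sums[OF ab])
  define g where "g j = (if j < J then \<bar>c j\<bar> * \<bar>u ^ Suc j - v ^ Suc j\<bar> else 0)" for j
  have sg: "g sums (\<Sum>j<J. \<bar>c j\<bar> * \<bar>u ^ Suc j - v ^ Suc j\<bar>)" unfolding g_def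
    by (rule sums_If_finite_set'[where A="{..<J}", simplified]) (use sums_0 in auto)
  have absdiff: "\<bar>u ^ Suc j - v ^ Suc j\<bar> = b ^ Suc j - a ^ Suc j" for j
    unfolding a_def b_def by (rule abs_power_diff_min_max[OF u(1) v(1)])
  have fle: "norm (f j) \<le> g j + e * d j" for j
  proof (cases "j < J")
    case True
    have "a ^ Suc j \<le> b ^ Suc j" using ab by (intro power_mono) auto
    then have "0 \<le> d j" unfolding d_def by simp
    then show ?thesis using True e0 unfolding f_def g_def by (simp add: abs_mult)
  next
    case False
    have "\<bar>c j\<bar> \<le> e / real (Suc j)" unfolding c_def
      using J[of "Suc j"] False by (simp add: divide_right_mono)
    then have "\<bar>c j\<bar> * \<bar>u ^ Suc j - v ^ Suc j\<bar> \<le> e / real (Suc j) * \<bar>u ^ Suc j - v ^ Suc j\<bar>"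
      by (rule mult_right_mono) simp
    moreover have "norm (f j) = \<bar>c j\<bar> * \<bar>u ^ Suc j - v ^ Suc j\<bar>"
      unfolding f_def by (simp only: real_norm_def abs_mult)
    ultimately show ?thesis using False unfolding g_def d_def absdiff by simp
  qed
  have "\<bar>Lambda_log w th u - Lambda_log w th v\<bar> = norm (\<Sum>j. f j)" using sf by (simp add: sums_iff)
  also have "\<dots> \<le> (\<Sum>j. norm (f j))" by (rule summable_norm[OF nsf])
  also have "\<dots> \<le> (\<Sum>j. g j + e * d j)"
    by (rule suminf_le[OF fle nsf]) (intro summable_add sums_summable[OF sg] summable_mult sums_summable[OF sd])
  also have "\<dots> = (\<Sum>j<J. \<bar>c j\<bar> * \<bar>u ^ Suc j - v ^ Suc j\<bar>) + e * ln ((1 - a) / (1 - b))"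
    using sums_unique[OF sums_add[OF sg sums_mult[OF sd, of e]]] by simp
  finally show ?thesis unfolding c_def a_def b_def .
qed

lemma Lambda_log_slowly_varying:
  assumes lim: "w \<longlonglongrightarrow> th" and C: "\<And>j. j \<ge> 1 \<Longrightarrow> \<bar>w j - th\<bar> \<le> C"
    and u1: "u \<longlonglongrightarrow> 1" and v1: "v \<longlonglongrightarrow> 1"
    and rng: "\<forall>\<^sub>F N in sequentially. 0 \<le> u N \<and> u N < 1 \<and> 0 \<le> v N \<and> v N < 1"
    and K: "K \<ge> 1" "\<forall>\<^sub>F N in sequentially. 1 - u N \<le> K * (1 - v N) \<and> 1 - v N \<le> K * (1 - u N)"
  shows "(\<lambda>N. Lambda_log w th (u N) - Lambda_log w th (v N)) \<longlonglongrightarrow> 0"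
proof (rule tendstoI)
  fix \<epsilon> :: real assume \<epsilon>: "\<epsilon> > 0"
  define e where "e = \<epsilon> / (2 * (ln K + 1))"
  have lnK: "ln K \<ge> 0" using K by simp
  have e0: "e > 0" unfolding e_def using \<epsilon> lnK by simp
  have "\<forall>\<^sub>F j in sequentially. dist (w j) th < e" using lim e0 by (rule tendstoD)
  then obtain J where J: "\<And>j. j \<ge> J \<Longrightarrow> \<bar>w j - th\<bar> < e"
    by (auto simp: eventually_sequentially dist_real_def)
  define head where "head N = (\<Sum>j<J. \<bar>(w (Suc j) - th) / real (Suc j)\<bar> * \<bar>u N ^ Suc j - v N ^ Suc j\<bar>)" for N
  have "head \<longlonglongrightarrow> (\<Sum>j<J. \<bar>(w (Suc j) - th) / real (Suc j)\<bar> * \<bar>1 ^ Suc j - 1 ^ Suc j\<bar>)"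
    unfolding head_def by (intro tendsto_intros u1 v1)
  then have "\<forall>\<^sub>F N in sequentially. head N < \<epsilon> / 2"
    using \<epsilon> by (intro order_tendstoD) auto
  then show "\<forall>\<^sub>F N in sequentially. dist (Lambda_log w th (u N) - Lambda_log w th (v N)) 0 < \<epsilon>"
    using K(2) rng
  proof eventually_elim
    case (elim N)
    have u: "0 \<le> u N" "u N < 1" and v: "0 \<le> v N" "v N < 1" using elim(3) by auto
    have ratio: "(1 - min (u N) (v N)) / (1 - max (u N) (v N)) \<le> K"
      using elim(2) u v by (auto simp: min_def max_def divide_le_eq mult_ac)
    have pos: "(1 - min (u N) (v N)) / (1 - max (u N) (v N)) > 0" using u v by simp
    have "\<bar>Lambda_log w th (u N) - Lambda_log w th (v N)\<bar>
        \<le> head N + e * ln ((1 - min (u N) (v N)) / (1 - max (u N) (v N)))"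
      unfolding head_def by (rule Lambda_log_diff_bound[OF C J u v])
    also have "\<dots> < \<epsilon> / 2 + e * (ln K + 1)"
    proof -
      have "ln ((1 - min (u N) (v N)) / (1 - max (u N) (v N))) \<le> ln K" using ratio pos by simp
      then show ?thesis using elim(1) e0 by (simp add: mult_left_mono add_strict_mono)
    qed
    also have "\<dots> = \<epsilon>" unfolding e_def using lnK by (simp add: field_simps)
    finally show ?case by (simp add: dist_real_def)
  qed
qed

lemma laplace_points:
  fixes k :: nat and t v :: "nat \<Rightarrow> real"
  assumes t_def: "t = (\<lambda>N. exp (-(real k + 1) / real N))" and v_def: "v = (\<lambda>N. 1 - 1 / real N)"
  shows "t \<longlonglongrightarrow> 1" "v \<longlonglongrightarrow> 1" "(\<lambda>N. real N * (1 - t N)) \<longlonglongrightarrow> real k + 1"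
    "\<forall>\<^sub>F N in sequentially. 0 \<le> t N \<and> t N < 1 \<and> 0 \<le> v N \<and> v N < 1"
    "\<forall>\<^sub>F N in sequentially. 1 - t N \<le> (real k + 2) * (1 - v N) \<and> 1 - v N \<le> (real k + 2) * (1 - t N)"
proof -
  define X where "X N = real N * (1 - t N)" for N
  show Xl: "(\<lambda>N. real N * (1 - t N)) \<longlonglongrightarrow> real k + 1" unfolding t_def by real_asymp
  show "t \<longlonglongrightarrow> 1" unfolding t_def by real_asymp
  show "v \<longlonglongrightarrow> 1" unfolding v_def by real_asymp
  show "\<forall>\<^sub>F N in sequentially. 0 \<le> t N \<and> t N < 1 \<and> 0 \<le> v N \<and> v N < 1"
    using eventually_gt_at_top[of 0]
  proof eventually_elim
    case (elim N)
    then have a: "-(real k + 1) / real N < 0" by (simp add: divide_neg_pos)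
    have b: "1 / real N \<le> 1" "1 / real N > 0" using elim by auto
    show ?case using a b by (auto simp: t_def v_def)
  qed
  have evX1: "\<forall>\<^sub>F N in sequentially. X N < real k + 2" using Xl unfolding X_def by (rule order_tendstoD) simp
  have evX2: "\<forall>\<^sub>F N in sequentially. X N > 1/2" using Xl unfolding X_def by (rule order_tendstoD) simp
  show "\<forall>\<^sub>F N in sequentially. 1 - t N \<le> (real k + 2) * (1 - v N) \<and> 1 - v N \<le> (real k + 2) * (1 - t N)"
    using evX1 evX2 eventually_gt_at_top[of 0]
  proof eventually_elim
    case (elim N)
    have Np: "real N > 0" using elim by simp
    have "(real k + 2) * X N \<ge> 2 * (1/2)" using elim(2) by (intro mult_mono) auto
    then have "1 / real N \<le> (real k + 2) * (X N / real N)" using Np by (simp add: divide_right_mono)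
    moreover have "1 - t N = X N / real N" unfolding X_def using Np by simp
    moreover have "X N / real N \<le> (real k + 2) * (1 / real N)" using elim(1) Np by (simp add: divide_right_mono)
    ultimately show ?case unfolding v_def by simp
  qed
qed

text \<open>Abelian step: by the factorisation of the generating function,
  \<open>\<Sum> h\<^sub>n t\<^sub>N\<^sup>n \<sim> (k+1)\<^sup>-\<^sup>\<theta> N\<^sup>\<theta> exp \<Phi>(1 - 1/N)\<close>.\<close>
lemma hrec_laplace_asymp:
  assumes w0: "\<And>j. j \<ge> 1 \<Longrightarrow> w j \<ge> 0" and wM: "\<And>j. j \<ge> 1 \<Longrightarrow> w j \<le> M"
    and lim: "w \<longlonglongrightarrow> th" and th: "th > 0"
  shows "(\<lambda>N. (\<Sum>n. hrec w n * exp (-(real k + 1) / real N) ^ n) /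
            (real N powr th * exp (Lambda_log w th (1 - 1 / real N)))) \<longlonglongrightarrow> (real k + 1) powr (- th)"
proof -
  define t where "t = (\<lambda>N::nat. exp (-(real k + 1) / real N))"
  define v where "v = (\<lambda>N::nat. 1 - 1 / real N)"
  note P = laplace_points[OF t_def v_def]
  have C: "\<bar>w j - th\<bar> \<le> M + th" if "j \<ge> 1" for j using w0[OF that] wM[OF that] th by auto
  have sv: "(\<lambda>N. Lambda_log w th (t N) - Lambda_log w th (v N)) \<longlonglongrightarrow> 0"
    by (rule Lambda_log_slowly_varying[OF lim C P(1,2,4) _ P(5)]) auto
  have lim2: "(\<lambda>N. (real N * (1 - t N)) powr (- th) * exp (Lambda_log w th (t N) - Lambda_log w th (v N)))
      \<longlonglongrightarrow> (real k + 1) powr (- th) * exp 0"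
    by (intro tendsto_intros P(3) sv) auto
  have "\<forall>\<^sub>F N in sequentially.
      (real N * (1 - t N)) powr (- th) * exp (Lambda_log w th (t N) - Lambda_log w th (v N)) =
       (\<Sum>n. hrec w n * t N ^ n) / (real N powr th * exp (Lambda_log w th (v N)))"
    using eventually_gt_at_top[of 0] P(4)
  proof eventually_elim
    case (elim N)
    have Np: "real N > 0" using elim by simp
    have t1: "0 \<le> t N" "t N < 1" using elim by auto
    have "(real N * (1 - t N)) powr (- th) = real N powr (- th) * (1 - t N) powr (- th)"
      using Np t1 by (simp add: powr_mult)
    then have "(real N * (1 - t N)) powr (- th) = (1 - t N) powr (- th) / real N powr th"
      by (simp add: powr_minus field_simps)
    then show ?case using hrec_gf_factor[of w M "t N" th, OF w0 wM t1 less_imp_le[OF th]]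
      by (simp add: exp_diff field_simps)
  qed
  then show ?thesis using Lim_transform_eventually[OF lim2] unfolding t_def v_def by simp
qed

section \<open>Polynomial sandwiches of an indicator\<close>

definition ramp :: "real \<Rightarrow> real \<Rightarrow> real \<Rightarrow> real" where
  "ramp a b x = max 0 (min 1 ((x - a) / (b - a)))"

lemma ramp_bounds: "0 \<le> ramp a b x" "ramp a b x \<le> 1"
  unfolding ramp_def by auto

lemma ramp_below: "a < b \<Longrightarrow> x \<le> a \<Longrightarrow> ramp a b x = 0"
  unfolding ramp_def by (simp add: divide_le_0_iff)

lemma ramp_above: "a < b \<Longrightarrow> b \<le> x \<Longrightarrow> ramp a b x = 1"
  unfolding ramp_def by (simp add: le_divide_eq)

lemma continuous_on_ramp: "a < b \<Longrightarrow> continuous_on S (ramp a b)"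
  unfolding ramp_def by (intro continuous_intros) auto

text \<open>Weierstrass approximation by polynomials without constant term, with an error
  that vanishes linearly at \<open>0\<close>, for a continuous function vanishing near \<open>0\<close>
  (approximate \<open>\<phi>(x)/x\<close> and multiply by \<open>x\<close>).\<close>
lemma x_poly_approx:
  fixes \<phi> :: "real \<Rightarrow> real"
  assumes cont: "continuous_on {0..1} \<phi>" and c: "c > 0" and vanish: "\<And>x. x \<le> c \<Longrightarrow> \<phi> x = 0"
    and \<eta>: "\<eta> > 0"
  obtains p m where "\<And>x. x \<in> {0..1} \<Longrightarrow> \<bar>\<phi> x - (\<Sum>k\<le>m. p k * x ^ Suc k)\<bar> \<le> \<eta> * x"
proof -
  define \<psi> where "\<psi> x = \<phi> x / max x c" for x
  have "continuous_on {0..1} \<psi>" unfolding \<psi>_def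
    using c by (intro continuous_intros cont) auto
  then obtain g where g: "real_polynomial_function g" "\<And>x. x \<in> {0..1} \<Longrightarrow> \<bar>\<psi> x - g x\<bar> < \<eta>"
    using Stone_Weierstrass_real_polynomial_function[OF compact_Icc _ \<eta>] by blast
  then obtain p m where gp: "g = (\<lambda>x. \<Sum>k\<le>m. p k * x ^ k)"
    using real_polynomial_function_iff_sum by blast
  have "\<bar>\<phi> x - (\<Sum>k\<le>m. p k * x ^ Suc k)\<bar> \<le> \<eta> * x" if x: "x \<in> {0..1}" for x
  proof -
    have x\<psi>: "\<phi> x = x * \<psi> x"
    proof (cases "x \<le> c")
      case True then show ?thesis using vanish by (simp add: \<psi>_def)
    next
      case False then show ?thesis using c by (simp add: \<psi>_def max_def)
    qed
    have "\<phi> x - (\<Sum>k\<le>m. p k * x ^ Suc k) = x * (\<psi> x - g x)"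
      unfolding x\<psi> gp by (simp add: sum_distrib_left right_diff_distrib mult_ac)
    then have "\<bar>\<phi> x - (\<Sum>k\<le>m. p k * x ^ Suc k)\<bar> = x * \<bar>\<psi> x - g x\<bar>"
      using x by (simp add: abs_mult)
    also have "\<dots> \<le> x * \<eta>" using g(2)[OF x] x by (intro mult_left_mono) auto
    finally show ?thesis by (simp add: mult.commute)
  qed
  then show ?thesis by (rule that)
qed

lemma poly_add_linear:
  "(\<Sum>k\<le>m. (p k + (if k = 0 then c else 0)) * (x::real) ^ Suc k) = (\<Sum>k\<le>m. p k * x ^ Suc k) + c * x"
proof -
  have "(\<Sum>k\<le>m. (if k = 0 then c else 0) * x ^ Suc k) = c * x" by (induction m) auto
  then show ?thesis by (simp add: distrib_right sum.distrib)
qed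

lemma indicator_poly_sandwich:
  fixes \<eta> \<delta> :: real
  assumes \<eta>: "\<eta> > 0" and \<delta>: "0 < \<delta>"
  obtains q m' p m where
    "\<And>x. x \<in> {0..1} \<Longrightarrow> (\<Sum>k\<le>m'. q k * x ^ Suc k) \<le> (if exp (-1) \<le> x then 1 else 0)"
    "\<And>x. x \<in> {0..1} \<Longrightarrow> (if exp (-1) \<le> x then 1 else 0) \<le> (\<Sum>k\<le>m. p k * x ^ Suc k)"
    "\<And>x. x \<in> {0..1} \<Longrightarrow> (\<Sum>k\<le>m. p k * x ^ Suc k) - (\<Sum>k\<le>m'. q k * x ^ Suc k)
        \<le> 4 * \<eta> * x + (if exp (-1-\<delta>) < x \<and> x < exp (-1+\<delta>) then 1 else 0)"
proof -
  define \<alpha> e1 \<beta> where "\<alpha> = exp (-1-\<delta>)" and "e1 = exp (-1::real)" and "\<beta> = exp (-1+\<delta>)"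
  have ord: "0 < \<alpha>" "\<alpha> < e1" "e1 < \<beta>" unfolding \<alpha>_def e1_def \<beta>_def using \<delta> by auto
  define \<phi>p \<phi>m where "\<phi>p = ramp \<alpha> e1" and "\<phi>m = ramp e1 \<beta>"
  obtain a n where a: "\<And>x. x \<in> {0..1} \<Longrightarrow> \<bar>\<phi>p x - (\<Sum>k\<le>n. a k * x ^ Suc k)\<bar> \<le> \<eta> * x"
    unfolding \<phi>p_def
  proof (rule x_poly_approx[of "ramp \<alpha> e1" \<alpha> \<eta>])
    show "continuous_on {0..1} (ramp \<alpha> e1)" by (rule continuous_on_ramp[OF ord(2)])
    show "\<And>x. x \<le> \<alpha> \<Longrightarrow> ramp \<alpha> e1 x = 0" by (rule ramp_below[OF ord(2)])
  qed (use ord \<eta> in auto)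
  obtain a' n' where a': "\<And>x. x \<in> {0..1} \<Longrightarrow> \<bar>\<phi>m x - (\<Sum>k\<le>n'. a' k * x ^ Suc k)\<bar> \<le> \<eta> * x"
    unfolding \<phi>m_def
  proof (rule x_poly_approx[of "ramp e1 \<beta>" e1 \<eta>])
    show "continuous_on {0..1} (ramp e1 \<beta>)" by (rule continuous_on_ramp[OF ord(3)])
    show "\<And>x. x \<le> e1 \<Longrightarrow> ramp e1 \<beta> x = 0" by (rule ramp_below[OF ord(3)])
  qed (use ord \<eta> in auto)
  define p q where "p k = a k + (if k = 0 then \<eta> else 0)" and "q k = a' k + (if k = 0 then - \<eta> else 0)" for k
  have P: "(\<Sum>k\<le>n. p k * x ^ Suc k) = (\<Sum>k\<le>n. a k * x ^ Suc k) + \<eta> * x"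
    and Q: "(\<Sum>k\<le>n'. q k * x ^ Suc k) = (\<Sum>k\<le>n'. a' k * x ^ Suc k) - \<eta> * x" for x
    unfolding p_def q_def poly_add_linear by simp_all
  have ind_p: "(if e1 \<le> x then 1 else 0) \<le> \<phi>p x" and ind_m: "\<phi>m x \<le> (if e1 \<le> x then 1 else 0)" for x
    using ord ramp_bounds[of \<alpha> e1 x] ramp_bounds[of e1 \<beta> x] ramp_above[of \<alpha> e1 x] ramp_below[of e1 \<beta> x]
    unfolding \<phi>p_def \<phi>m_def by auto
  have win: "\<phi>p x - \<phi>m x \<le> (if \<alpha> < x \<and> x < \<beta> then 1 else 0)" for x
    using ord ramp_bounds[of \<alpha> e1 x] ramp_bounds[of e1 \<beta> x] ramp_below[of \<alpha> e1 x] ramp_above[of e1 \<beta> x]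
    unfolding \<phi>p_def \<phi>m_def by (auto simp: not_less)
  show ?thesis
  proof (rule that[of q n' p n])
    fix x :: real assume x: "x \<in> {0..1}"
    show "(\<Sum>k\<le>n'. q k * x ^ Suc k) \<le> (if exp (-1) \<le> x then 1 else 0)"
      using a'[OF x] ind_m[of x] unfolding Q e1_def by linarith
    show "(if exp (-1) \<le> x then 1 else 0) \<le> (\<Sum>k\<le>n. p k * x ^ Suc k)"
      using a[OF x] ind_p[of x] unfolding P e1_def by linarith
    show "(\<Sum>k\<le>n. p k * x ^ Suc k) - (\<Sum>k\<le>n'. q k * x ^ Suc k)
        \<le> 4 * \<eta> * x + (if exp (-1-\<delta>) < x \<and> x < exp (-1+\<delta>) then 1 else 0)"
      using a[OF x] a'[OF x] win[of x] unfolding P Q \<alpha>_def \<beta>_def by linarith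
  qed
qed

section \<open>A Tauberian theorem of Karamata type\<close>

definition poly_laplace :: "(nat \<Rightarrow> real) \<Rightarrow> (nat \<Rightarrow> real) \<Rightarrow> nat \<Rightarrow> nat \<Rightarrow> real" where
  "poly_laplace s p m N = (\<Sum>n. s n * (\<Sum>k\<le>m. p k * exp (- real n / real N) ^ Suc k))"

text \<open>\<open>(e\<^sup>-\<^sup>n\<^sup>/\<^sup>N)\<^sup>k\<^sup>+\<^sup>1 = (e\<^sup>-\<^sup>(\<^sup>k\<^sup>+\<^sup>1\<^sup>)\<^sup>/\<^sup>N)\<^sup>n\<close>: this turns \<open>poly_laplace\<close> into Laplace transforms.\<close>
lemma exp_pow_swap: "exp (- real n / real N) ^ Suc k = exp (-(real k + 1) / real N) ^ n"
proof -
  have "exp (- real n / real N) ^ Suc k = exp (real (Suc k) * (- real n / real N))"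
    by (rule exp_of_nat_mult[symmetric])
  also have "\<dots> = exp (real n * (-(real k + 1) / real N))" by (simp add: divide_simps algebra_simps)
  also have "\<dots> = exp (-(real k + 1) / real N) ^ n" by (rule exp_of_nat_mult)
  finally show ?thesis .
qed

lemma poly_laplace_expand:
  assumes ssum: "\<And>t. 0 \<le> t \<Longrightarrow> t < 1 \<Longrightarrow> summable (\<lambda>n. s n * t ^ n)" and N: "N > 0"
  shows "summable (\<lambda>n. s n * (\<Sum>k\<le>m. p k * exp (- real n / real N) ^ Suc k))"
    "poly_laplace s p m N = (\<Sum>k\<le>m. p k * (\<Sum>n. s n * exp (-(real k + 1) / real N) ^ n))"
proof -
  have eq: "s n * (\<Sum>k\<le>m. p k * exp (- real n / real N) ^ Suc k)
      = (\<Sum>k\<le>m. p k * (s n * exp (-(real k + 1) / real N) ^ n))" for n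
    unfolding sum_distrib_left exp_pow_swap by (simp only: mult_ac)
  have sk': "summable (\<lambda>n. s n * exp (-(real k + 1) / real N) ^ n)" for k
    using ssum N by (simp add: divide_neg_pos)
  have sk: "summable (\<lambda>n. p k * (s n * exp (-(real k + 1) / real N) ^ n))" for k
    using sk' by (intro summable_mult)
  show "summable (\<lambda>n. s n * (\<Sum>k\<le>m. p k * exp (- real n / real N) ^ Suc k))"
    unfolding eq by (intro summable_sum sk)
  show "poly_laplace s p m N = (\<Sum>k\<le>m. p k * (\<Sum>n. s n * exp (-(real k + 1) / real N) ^ n))"
    unfolding poly_laplace_def eq suminf_sum[OF sk] suminf_mult[OF sk'] ..
qed

lemma poly_laplace_lim:
  assumes ssum: "\<And>t. 0 \<le> t \<Longrightarrow> t < 1 \<Longrightarrow> summable (\<lambda>n. s n * t ^ n)"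
    and lap: "\<And>k. (\<lambda>N. (\<Sum>n. s n * exp (-(real k + 1) / real N) ^ n) / D N) \<longlonglongrightarrow> (real k + 1) powr (- th)"
  shows "(\<lambda>N. poly_laplace s p m N / D N) \<longlonglongrightarrow> (\<Sum>k\<le>m. p k * (real k + 1) powr (- th))"
proof -
  have l: "(\<lambda>N. \<Sum>k\<le>m. p k * ((\<Sum>n. s n * exp (-(real k + 1) / real N) ^ n) / D N))
        \<longlonglongrightarrow> (\<Sum>k\<le>m. p k * (real k + 1) powr (- th))"
    by (intro tendsto_sum tendsto_mult tendsto_const lap)
  have "\<forall>\<^sub>F N in sequentially. (\<Sum>k\<le>m. p k * ((\<Sum>n. s n * exp (-(real k + 1) / real N) ^ n) / D N))
      = poly_laplace s p m N / D N"
    using eventually_gt_at_top[of 0]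
    by eventually_elim (simp only: poly_laplace_expand(2)[OF ssum] sum_divide_distrib times_divide_eq_right)
  then show ?thesis by (rule Lim_transform_eventually[OF l])
qed

lemma exp_ge_exp_neg1_iff: "N > 0 \<Longrightarrow> (exp (-1) \<le> exp (- real n / real N)) \<longleftrightarrow> n \<le> N"
  by (simp add: divide_le_eq)

lemma exp_in_window_iff:
  assumes "N > 0"
  shows "(exp (-1-\<delta>) < exp (- real n / real N) \<and> exp (- real n / real N) < exp (-1+\<delta>))
     \<longleftrightarrow> n \<in> window N \<delta>"
proof -
  have Np: "real N > 0" using assms by simp
  have "(exp (-1-\<delta>) < exp (- real n / real N)) \<longleftrightarrow> real n / real N < 1 + \<delta>" by simp (rule iffI; linarith)
  also have "\<dots> \<longleftrightarrow> real n < real N * (1 + \<delta>)" using Np by (simp add: divide_less_eq mult.commute)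
  finally have 1: "(exp (-1-\<delta>) < exp (- real n / real N)) \<longleftrightarrow> real n < real N * (1 + \<delta>)" .
  have "(exp (- real n / real N) < exp (-1+\<delta>)) \<longleftrightarrow> 1 - \<delta> < real n / real N" by simp (rule iffI; linarith)
  also have "\<dots> \<longleftrightarrow> real N * (1 - \<delta>) < real n" using Np by (simp add: less_divide_eq mult.commute)
  finally have 2: "(exp (- real n / real N) < exp (-1+\<delta>)) \<longleftrightarrow> real N * (1 - \<delta>) < real n" .
  show ?thesis using 1 2 unfolding window_def by blast
qed

text \<open>Since \<open>1\<^sub>[\<^sub>e\<^sub>\<^sup>-\<^sup>1\<^sub>,\<^sub>1\<^sub>](e\<^sup>-\<^sup>n\<^sup>/\<^sup>N) = 1\<^sub>n\<^sub>\<le>\<^sub>N\<close>, a polynomial sandwich of the indicator sandwiches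
  the partial sums.\<close>
lemma poly_laplace_le_partial_sum:
  assumes s0: "\<And>n. s n \<ge> 0" and ssum: "\<And>t. 0 \<le> t \<Longrightarrow> t < 1 \<Longrightarrow> summable (\<lambda>n. s n * t ^ n)"
    and N: "N > 0"
    and below: "\<And>x. x \<in> {0..1} \<Longrightarrow> (\<Sum>k\<le>m. q k * x ^ Suc k) \<le> (if exp (-1) \<le> x then 1 else 0)"
  shows "poly_laplace s q m N \<le> (\<Sum>n\<le>N. s n)"
proof -
  have fin: "summable (\<lambda>n. s n * (if n \<le> N then 1 else 0))" by (rule summable_finite[of "{..N}"]) auto
  have "(\<Sum>n\<le>N. s n) = (\<Sum>n. s n * (if n \<le> N then 1 else 0))" by (subst suminf_finite[of "{..N}"]) auto
  moreover have "poly_laplace s q m N \<le> (\<Sum>n. s n * (if n \<le> N then 1 else 0))"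
    unfolding poly_laplace_def
  proof (rule suminf_le)
    fix n
    show "s n * (\<Sum>k\<le>m. q k * exp (- real n / real N) ^ Suc k) \<le> s n * (if n \<le> N then 1 else 0)"
      using below[of "exp (- real n / real N)"] s0[of n] exp_ge_exp_neg1_iff[OF N, of n] N
      by (intro mult_left_mono) (auto simp: divide_nonneg_pos)
  qed (use poly_laplace_expand(1)[OF ssum N] fin in auto)
  ultimately show ?thesis by simp
qed

lemma partial_sum_le_poly_laplace:
  assumes s0: "\<And>n. s n \<ge> 0" and ssum: "\<And>t. 0 \<le> t \<Longrightarrow> t < 1 \<Longrightarrow> summable (\<lambda>n. s n * t ^ n)"
    and N: "N > 0"
    and above: "\<And>x. x \<in> {0..1} \<Longrightarrow> (if exp (-1) \<le> x then 1 else 0) \<le> (\<Sum>k\<le>m. p k * x ^ Suc k)"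
  shows "(\<Sum>n\<le>N. s n) \<le> poly_laplace s p m N"
proof -
  have fin: "summable (\<lambda>n. s n * (if n \<le> N then 1 else 0))" by (rule summable_finite[of "{..N}"]) auto
  have "(\<Sum>n\<le>N. s n) = (\<Sum>n. s n * (if n \<le> N then 1 else 0))" by (subst suminf_finite[of "{..N}"]) auto
  moreover have "(\<Sum>n. s n * (if n \<le> N then 1 else 0)) \<le> poly_laplace s p m N"
    unfolding poly_laplace_def
  proof (rule suminf_le)
    fix n
    show "s n * (if n \<le> N then 1 else 0) \<le> s n * (\<Sum>k\<le>m. p k * exp (- real n / real N) ^ Suc k)"
      using above[of "exp (- real n / real N)"] s0[of n] exp_ge_exp_neg1_iff[OF N, of n] N
      by (intro mult_left_mono) (auto simp: divide_nonneg_pos)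
  qed (use poly_laplace_expand(1)[OF ssum N] fin in auto)
  ultimately show ?thesis by simp
qed

lemma poly_laplace_gap:
  assumes b0: "\<And>n. b n \<ge> 0" and bsum: "\<And>t. 0 \<le> t \<Longrightarrow> t < 1 \<Longrightarrow> summable (\<lambda>n. b n * t ^ n)"
    and N: "N > 0"
    and gap: "\<And>x. x \<in> {0..1} \<Longrightarrow> (\<Sum>k\<le>m. p k * x ^ Suc k) - (\<Sum>k\<le>m'. q k * x ^ Suc k)
        \<le> 4 * \<eta> * x + (if exp (-1-\<delta>) < x \<and> x < exp (-1+\<delta>) then 1 else 0)"
  shows "poly_laplace b p m N - poly_laplace b q m' N
    \<le> 4 * \<eta> * (\<Sum>n. b n * exp (- 1 / real N) ^ n) + (\<Sum>n\<in>window N \<delta>. b n)"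
proof -
  have finW: "finite (window N \<delta>)"
    by (rule finite_subset[of _ "{..nat \<lceil>real N * (1 + \<delta>)\<rceil>}"]) (auto simp: window_def le_nat_iff, linarith)
  have xn: "exp (- real n / real N) = exp (- 1 / real N) ^ n" for n
    using exp_pow_swap[of n N 0] by simp
  note sP = poly_laplace_expand(1)[OF bsum N, where m=m and p=p]
    and sQ = poly_laplace_expand(1)[OF bsum N, where m=m' and p=q]
  have s1: "summable (\<lambda>n. b n * exp (- 1 / real N) ^ n)"
    using bsum N by (simp add: divide_neg_pos)
  have s2: "summable (\<lambda>n. b n * (if n \<in> window N \<delta> then 1 else 0))"
    by (rule summable_finite[OF finW]) auto
  have "poly_laplace b p m N - poly_laplace b q m' N = (\<Sum>n. b n * ((\<Sum>k\<le>m. p k * exp (- real n / real N) ^ Suc k)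
                   - (\<Sum>k\<le>m'. q k * exp (- real n / real N) ^ Suc k)))"
    unfolding poly_laplace_def using suminf_diff[OF sP sQ] by (simp add: right_diff_distrib)
  also have "\<dots> \<le> (\<Sum>n. 4 * \<eta> * (b n * exp (- 1 / real N) ^ n) + b n * (if n \<in> window N \<delta> then 1 else 0))"
  proof (rule suminf_le)
    fix n
    have "b n * ((\<Sum>k\<le>m. p k * exp (- real n / real N) ^ Suc k) - (\<Sum>k\<le>m'. q k * exp (- real n / real N) ^ Suc k))
        \<le> b n * (4 * \<eta> * exp (- real n / real N) + (if n \<in> window N \<delta> then 1 else 0))"
      using gap[of "exp (- real n / real N)"] b0[of n] N exp_in_window_iff[OF N, of \<delta> n]
      by (intro mult_left_mono) (auto simp: divide_nonneg_pos)
    then show "b n * ((\<Sum>k\<le>m. p k * exp (- real n / real N) ^ Suc k) - (\<Sum>k\<le>m'. q k * exp (- real n / real N) ^ Suc k))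
        \<le> 4 * \<eta> * (b n * exp (- 1 / real N) ^ n) + b n * (if n \<in> window N \<delta> then 1 else 0)"
      unfolding xn by (simp add: algebra_simps)
  next
    show "summable (\<lambda>n. b n * ((\<Sum>k\<le>m. p k * exp (- real n / real N) ^ Suc k) - (\<Sum>k\<le>m'. q k * exp (- real n / real N) ^ Suc k)))"
      using summable_diff[OF sP sQ] by (simp add: right_diff_distrib)
    show "summable (\<lambda>n. 4 * \<eta> * (b n * exp (- 1 / real N) ^ n) + b n * (if n \<in> window N \<delta> then 1 else 0))"
      by (intro summable_add summable_mult s1 s2)
  qed
  also have "\<dots> = 4 * \<eta> * (\<Sum>n. b n * exp (- 1 / real N) ^ n) + (\<Sum>n\<in>window N \<delta>. b n)"
  proof -
    have "(\<Sum>n. b n * (if n \<in> window N \<delta> then 1 else 0)) = (\<Sum>n\<in>window N \<delta>. b n)"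
      by (subst suminf_finite[OF finW]) auto
    then show ?thesis using suminf_add[OF summable_mult[OF s1, of "4 * \<eta>"] s2] suminf_mult[OF s1, of "4 * \<eta>"]
      by simp
  qed
  finally show ?thesis .
qed

lemma poly_laplace_gap_limit:
  assumes b0: "\<And>n. b n \<ge> 0" and bsum: "\<And>t. 0 \<le> t \<Longrightarrow> t < 1 \<Longrightarrow> summable (\<lambda>n. b n * t ^ n)"
    and Dpos: "\<forall>\<^sub>F N in sequentially. D N > 0"
    and lap1: "(\<lambda>N. (\<Sum>n. b n * exp (- 1 / real N) ^ n) / D N) \<longlonglongrightarrow> 1"
    and \<delta>: "\<delta> > 0"
    and win: "\<forall>\<^sub>F N in sequentially. (\<Sum>n\<in>window N \<delta>. b n) \<le> K * (\<delta> + 1 / real N) * D N"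
    and gap: "\<And>x. x \<in> {0..1} \<Longrightarrow> (\<Sum>k\<le>m. p k * x ^ Suc k) - (\<Sum>k\<le>m'. q k * x ^ Suc k)
        \<le> 4 * \<eta> * x + (if exp (-1-\<delta>) < x \<and> x < exp (-1+\<delta>) then 1 else 0)"
    and LP: "(\<lambda>N. poly_laplace b p m N / D N) \<longlonglongrightarrow> \<mu>p"
    and LQ: "(\<lambda>N. poly_laplace b q m' N / D N) \<longlonglongrightarrow> \<mu>q"
  shows "\<mu>p - \<mu>q \<le> 4 * \<eta> + \<bar>K\<bar> * \<delta>"
proof -
  have l1: "(\<lambda>N. poly_laplace b p m N / D N - poly_laplace b q m' N / D N) \<longlonglongrightarrow> \<mu>p - \<mu>q"
    by (intro tendsto_diff LP LQ)
  have l2: "(\<lambda>N. 4 * \<eta> * ((\<Sum>n. b n * exp (- 1 / real N) ^ n) / D N) + \<bar>K\<bar> * (\<delta> + 1 / real N))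
      \<longlonglongrightarrow> 4 * \<eta> * 1 + \<bar>K\<bar> * (\<delta> + 0)"
    by (intro tendsto_intros lap1 lim_inverse_n')
  have "\<mu>p - \<mu>q \<le> 4 * \<eta> * 1 + \<bar>K\<bar> * (\<delta> + 0)"
  proof (rule tendsto_le[OF _ l2 l1])
    show "\<forall>\<^sub>F N in sequentially. poly_laplace b p m N / D N - poly_laplace b q m' N / D N
        \<le> 4 * \<eta> * ((\<Sum>n. b n * exp (- 1 / real N) ^ n) / D N) + \<bar>K\<bar> * (\<delta> + 1 / real N)"
      using Dpos eventually_gt_at_top[of 0] win
    proof eventually_elim
      case (elim N)
      have N: "N > 0" and Dp: "D N > 0" using elim by auto
      have "(\<Sum>n\<in>window N \<delta>. b n) \<le> \<bar>K\<bar> * (\<delta> + 1 / real N) * D N"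
        using elim(3) \<delta> Dp by (smt (verit) abs_ge_self divide_nonneg_nonneg mult_right_mono of_nat_0_le_iff)
      then have "poly_laplace b p m N - poly_laplace b q m' N
          \<le> 4 * \<eta> * (\<Sum>n. b n * exp (- 1 / real N) ^ n) + \<bar>K\<bar> * (\<delta> + 1 / real N) * D N"
        using poly_laplace_gap[OF b0 bsum N gap] by linarith
      then have "(poly_laplace b p m N - poly_laplace b q m' N) / D N
          \<le> (4 * \<eta> * (\<Sum>n. b n * exp (- 1 / real N) ^ n) + \<bar>K\<bar> * (\<delta> + 1 / real N) * D N) / D N"
        using Dp by (intro divide_right_mono) auto
      then show ?case using Dp by (simp add: diff_divide_distrib add_divide_distrib)
    qed
  qed simp
  then show ?thesis by simp
qed

lemma poly_laplace_bracket:
  assumes b0: "\<And>n. b n \<ge> 0" and bsum: "\<And>t. 0 \<le> t \<Longrightarrow> t < 1 \<Longrightarrow> summable (\<lambda>n. b n * t ^ n)"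
    and Dpos: "\<forall>\<^sub>F N in sequentially. D N > 0"
    and below: "\<And>x. x \<in> {0..1} \<Longrightarrow> (\<Sum>k\<le>m'. q k * x ^ Suc k) \<le> (if exp (-1) \<le> x then 1 else 0)"
    and above: "\<And>x. x \<in> {0..1} \<Longrightarrow> (if exp (-1) \<le> x then 1 else 0) \<le> (\<Sum>k\<le>m. p k * x ^ Suc k)"
    and LP: "(\<lambda>N. poly_laplace b p m N / D N) \<longlonglongrightarrow> \<mu>p"
    and LQ: "(\<lambda>N. poly_laplace b q m' N / D N) \<longlonglongrightarrow> \<mu>q"
    and sums: "(\<lambda>N. (\<Sum>n\<le>N. b n) / D N) \<longlonglongrightarrow> c"
  shows "\<mu>q \<le> c" "c \<le> \<mu>p"
proof -
  show "c \<le> \<mu>p"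
  proof (rule tendsto_le[OF _ LP sums])
    show "\<forall>\<^sub>F N in sequentially. (\<Sum>n\<le>N. b n) / D N \<le> poly_laplace b p m N / D N"
      using Dpos eventually_gt_at_top[of 0]
      by eventually_elim (auto intro!: divide_right_mono partial_sum_le_poly_laplace[OF b0 bsum _ above])
  qed simp
  show "\<mu>q \<le> c"
  proof (rule tendsto_le[OF _ sums LQ])
    show "\<forall>\<^sub>F N in sequentially. poly_laplace b q m' N / D N \<le> (\<Sum>n\<le>N. b n) / D N"
      using Dpos eventually_gt_at_top[of 0]
      by eventually_elim (auto intro!: divide_right_mono poly_laplace_le_partial_sum[OF b0 bsum _ below])
  qed simp
qed

lemma tauberian:
  fixes a b Da Db :: "nat \<Rightarrow> real" and th c K :: real
  assumes a0: "\<And>n. a n \<ge> 0" and b0: "\<And>n. b n \<ge> 0"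
    and asum: "\<And>t. 0 \<le> t \<Longrightarrow> t < 1 \<Longrightarrow> summable (\<lambda>n. a n * t ^ n)"
    and bsum: "\<And>t. 0 \<le> t \<Longrightarrow> t < 1 \<Longrightarrow> summable (\<lambda>n. b n * t ^ n)"
    and Dapos: "\<forall>\<^sub>F N in sequentially. Da N > 0" and Dbpos: "\<forall>\<^sub>F N in sequentially. Db N > 0"
    and lap_a: "\<And>k. (\<lambda>N. (\<Sum>n. a n * exp (-(real k + 1) / real N) ^ n) / Da N) \<longlonglongrightarrow> (real k + 1) powr (- th)"
    and lap_b: "\<And>k. (\<lambda>N. (\<Sum>n. b n * exp (-(real k + 1) / real N) ^ n) / Db N) \<longlonglongrightarrow> (real k + 1) powr (- th)"
    and b_sums: "(\<lambda>N. (\<Sum>n\<le>N. b n) / Db N) \<longlonglongrightarrow> c"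
    and win: "\<forall>\<^sub>F N in sequentially. \<forall>\<delta>. 0 < \<delta> \<and> \<delta> \<le> 1/2 \<longrightarrow>
       (\<Sum>n\<in>window N \<delta>. b n) \<le> K * (\<delta> + 1 / real N) * Db N"
  shows "(\<lambda>N. (\<Sum>n\<le>N. a n) / Da N) \<longlonglongrightarrow> c"
proof (rule tendstoI)
  fix \<epsilon> :: real assume \<epsilon>: "\<epsilon> > 0"
  define \<eta> \<delta> where "\<eta> = \<epsilon> / 16" and "\<delta> = min (1/2) (\<epsilon> / (4 * (\<bar>K\<bar> + 1)))"
  have \<eta>0: "\<eta> > 0" and \<delta>0: "0 < \<delta>" "\<delta> \<le> 1/2" unfolding \<eta>_def \<delta>_def using \<epsilon> by (auto simp: min_def)
  have "\<bar>K\<bar> * \<delta> \<le> \<bar>K\<bar> * (\<epsilon> / (4 * (\<bar>K\<bar> + 1)))" unfolding \<delta>_def by (intro mult_left_mono) auto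
  also have "\<dots> \<le> (\<bar>K\<bar> + 1) * (\<epsilon> / (4 * (\<bar>K\<bar> + 1)))" using \<epsilon> by (intro mult_right_mono) auto
  also have "\<dots> = \<epsilon> / 4" by (simp add: field_simps)
  finally have small: "4 * \<eta> + \<bar>K\<bar> * \<delta> \<le> \<epsilon> / 2" unfolding \<eta>_def by simp
  obtain q m' p m where
    below: "\<And>x. x \<in> {0..1} \<Longrightarrow> (\<Sum>k\<le>m'. q k * x ^ Suc k) \<le> (if exp (-1) \<le> x then 1 else 0)" and
    above: "\<And>x. x \<in> {0..1} \<Longrightarrow> (if exp (-1) \<le> x then 1 else 0) \<le> (\<Sum>k\<le>m. p k * x ^ Suc k)" and
    gap: "\<And>x. x \<in> {0..1} \<Longrightarrow> (\<Sum>k\<le>m. p k * x ^ Suc k) - (\<Sum>k\<le>m'. q k * x ^ Suc k)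
        \<le> 4 * \<eta> * x + (if exp (-1-\<delta>) < x \<and> x < exp (-1+\<delta>) then 1 else 0)"
    by (rule indicator_poly_sandwich[OF \<eta>0 \<delta>0(1)]) (rule that)
  define \<mu>p \<mu>q where "\<mu>p = (\<Sum>k\<le>m. p k * (real k + 1) powr (- th))"
    and "\<mu>q = (\<Sum>k\<le>m'. q k * (real k + 1) powr (- th))"
  have LPa: "(\<lambda>N. poly_laplace a p m N / Da N) \<longlonglongrightarrow> \<mu>p"
    unfolding \<mu>p_def by (rule poly_laplace_lim[OF asum lap_a])
  have LQa: "(\<lambda>N. poly_laplace a q m' N / Da N) \<longlonglongrightarrow> \<mu>q"
    unfolding \<mu>q_def by (rule poly_laplace_lim[OF asum lap_a])
  have LPb: "(\<lambda>N. poly_laplace b p m N / Db N) \<longlonglongrightarrow> \<mu>p"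
    unfolding \<mu>p_def by (rule poly_laplace_lim[OF bsum lap_b])
  have LQb: "(\<lambda>N. poly_laplace b q m' N / Db N) \<longlonglongrightarrow> \<mu>q"
    unfolding \<mu>q_def by (rule poly_laplace_lim[OF bsum lap_b])
  note bracket = poly_laplace_bracket[OF b0 bsum Dbpos below above LPb LQb b_sums]
  have width: "\<mu>p - \<mu>q \<le> 4 * \<eta> + \<bar>K\<bar> * \<delta>"
  proof (rule poly_laplace_gap_limit[OF b0 bsum Dbpos _ \<delta>0(1) _ gap LPb LQb])
    show "(\<lambda>N. (\<Sum>n. b n * exp (- 1 / real N) ^ n) / Db N) \<longlonglongrightarrow> 1" using lap_b[of 0] by simp
    show "\<forall>\<^sub>F N in sequentially. (\<Sum>n\<in>window N \<delta>. b n) \<le> K * (\<delta> + 1 / real N) * Db N"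
      using win by (rule eventually_mono) (use \<delta>0 in blast)
  qed
  have evP: "\<forall>\<^sub>F N in sequentially. poly_laplace a p m N / Da N < \<mu>p + \<epsilon> / 4"
    using LPa \<epsilon> by (intro order_tendstoD) auto
  have evQ: "\<forall>\<^sub>F N in sequentially. poly_laplace a q m' N / Da N > \<mu>q - \<epsilon> / 4"
    using LQa \<epsilon> by (intro order_tendstoD) auto
  have "\<forall>\<^sub>F N in sequentially. poly_laplace a q m' N / Da N \<le> (\<Sum>n\<le>N. a n) / Da N
      \<and> (\<Sum>n\<le>N. a n) / Da N \<le> poly_laplace a p m N / Da N"
    using Dapos eventually_gt_at_top[of 0]
    by eventually_elim (auto intro!: divide_right_mono poly_laplace_le_partial_sum[OF a0 asum _ below]
                                     partial_sum_le_poly_laplace[OF a0 asum _ above])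
  then show "\<forall>\<^sub>F N in sequentially. dist ((\<Sum>n\<le>N. a n) / Da N) c < \<epsilon>"
    using evP evQ by eventually_elim (use bracket width small in \<open>auto simp: dist_real_def abs_less_iff\<close>)
qed

section \<open>The ratio \<open>N h\<^sub>N / \<Sum>\<^sub>n\<^sub>\<le>\<^sub>N h\<^sub>n\<close>\<close>

text \<open>One term of the convolution: either \<open>N - j \<ge> J\<close>, or \<open>j > N/2\<close> and \<open>h\<^sub>j\<close> is small.\<close>
lemma hrec_ratio_term_bound:
  assumes w0: "\<And>j. j \<ge> 1 \<Longrightarrow> w j \<ge> 0" and wM: "\<And>j. j \<ge> 1 \<Longrightarrow> w j \<le> M"
    and C: "\<And>j. j \<ge> 1 \<Longrightarrow> \<bar>w j - th\<bar> \<le> C"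
    and J: "\<And>j. j \<ge> J \<Longrightarrow> \<bar>w j - th\<bar> \<le> e" "J \<ge> 1" and N: "N \<ge> 2 * J" and j: "j < N"
  shows "\<bar>(w (N - j) - th) * hrec w j\<bar>
    \<le> e * hrec w j + (if N - J \<le> j then C * (2 * M * hpsum w N / real N) else 0)"
proof (cases "N - J \<le> j")
  case True
  have M0: "M \<ge> 0" using w0[of 1] wM[of 1] by simp
  have C0: "C \<ge> 0" using C[of 1] by simp
  have h0: "hrec w j \<ge> 0" by (rule hrec_nonneg[OF w0])
  have j1: "1 \<le> j" using True N J(2) by linarith
  have Np: "real N > 0" using j by simp
  have "\<bar>(w (N - j) - th) * hrec w j\<bar> \<le> C * hrec w j"
    using C[of "N - j"] j h0 by (simp add: abs_mult mult_right_mono)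
  also have "\<dots> \<le> C * (2 * M * hpsum w N / real N)"
  proof (rule mult_left_mono[OF _ C0])
    have "hrec w j \<le> M * hpsum w N / real j" using hrec_le_hpsum[of w M j N, OF w0 wM j1] j by simp
    also have "\<dots> \<le> M * hpsum w N / (real N / 2)"
      using True N j1 M0 Np hpsum_ge_1[of w N, OF w0] by (intro divide_left_mono) auto
    finally show "hrec w j \<le> 2 * M * hpsum w N / real N" by (simp add: field_simps)
  qed
  finally have "\<bar>(w (N - j) - th) * hrec w j\<bar> \<le> C * (2 * M * hpsum w N / real N)" .
  moreover have "0 \<le> e * hrec w j" using J(1)[of J] h0 by simp
  ultimately show ?thesis using True by simp
next
  case False
  have h0: "hrec w j \<ge> 0" by (rule hrec_nonneg[OF w0])
  have "\<bar>w (N - j) - th\<bar> * hrec w j \<le> e * hrec w j" using J(1)[of "N - j"] h0 False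
    by (intro mult_right_mono) auto
  then show ?thesis using False h0 by (simp add: abs_mult)
qed

text \<open>From \<open>N h\<^sub>N = \<Sum>\<^sub>j\<^sub><\<^sub>N w\<^sub>N\<^sub>-\<^sub>j h\<^sub>j\<close>: the terms with \<open>N - j \<ge> J\<close> have \<open>w\<^sub>N\<^sub>-\<^sub>j\<close> within \<open>e\<close>
  of \<open>\<theta>\<close>, and the at most \<open>J\<close> remaining terms are each \<open>O(\<Sum>\<^sub>n\<^sub>\<le>\<^sub>N h\<^sub>n / N)\<close>.\<close>
lemma hrec_ratio_error:
  assumes w0: "\<And>j. j \<ge> 1 \<Longrightarrow> w j \<ge> 0" and wM: "\<And>j. j \<ge> 1 \<Longrightarrow> w j \<le> M"
    and C: "\<And>j. j \<ge> 1 \<Longrightarrow> \<bar>w j - th\<bar> \<le> C" and th: "th \<ge> 0"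
    and J: "\<And>j. j \<ge> J \<Longrightarrow> \<bar>w j - th\<bar> \<le> e" "J \<ge> 1" and N: "N \<ge> 2 * J"
  shows "\<bar>real N * hrec w N - th * hpsum w N\<bar> \<le> (e + (2 * real J * C * M + th * M) / real N) * hpsum w N"
proof -
  define H where "H = hpsum w N"
  have e0: "e \<ge> 0" using J(1)[of J] by simp
  have h0: "hrec w j \<ge> 0" for j by (rule hrec_nonneg[OF w0])
  have N1: "N \<ge> 1" and Np: "real N > 0" using N J(2) by auto
  have split: "th * H = (\<Sum>j<N. th * hrec w j) + th * hrec w N"
    unfolding H_def hpsum_def by (simp add: lessThan_Suc_atMost[symmetric] sum_distrib_left distrib_left)
  have diff: "real N * hrec w N - th * H = (\<Sum>j<N. (w (N - j) - th) * hrec w j) - th * hrec w N"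
    unfolding hrec_convolution[OF N1] split by (simp add: sum_subtractf left_diff_distrib)
  have each: "\<bar>(w (N - j) - th) * hrec w j\<bar> \<le> e * hrec w j + (if N - J \<le> j then C * (2 * M * H / real N) else 0)"
    if "j < N" for j
    unfolding H_def by (rule hrec_ratio_term_bound[OF w0 wM C J N that])
  have "\<bar>\<Sum>j<N. (w (N - j) - th) * hrec w j\<bar>
      \<le> (\<Sum>j<N. e * hrec w j + (if N - J \<le> j then C * (2 * M * H / real N) else 0))"
    by (rule order_trans[OF sum_abs sum_mono]) (use each in auto)
  also have "\<dots> = e * (\<Sum>j<N. hrec w j) + real J * (C * (2 * M * H / real N))"
  proof -
    have "{..<N} \<inter> {j. N - J \<le> j} = {N - J..<N}" by auto
    then have "(\<Sum>j<N. (if N - J \<le> j then C * (2 * M * H / real N) else 0)) = real J * (C * (2 * M * H / real N))"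
      using N by (simp add: sum.If_cases)
    then show ?thesis by (simp add: sum.distrib sum_distrib_left)
  qed
  also have "\<dots> \<le> e * H + real J * (C * (2 * M * H / real N))"
  proof -
    have "(\<Sum>j<N. hrec w j) \<le> H" unfolding H_def hpsum_def using h0 by (intro sum_mono2) auto
    then show ?thesis using e0 by (simp add: mult_left_mono)
  qed
  finally have A: "\<bar>\<Sum>j<N. (w (N - j) - th) * hrec w j\<bar> \<le> e * H + real J * (C * (2 * M * H / real N))" .
  have B: "th * hrec w N \<le> th * (M * H / real N)"
    using hrec_le_hpsum[of w M N N, OF w0 wM N1] th unfolding H_def by (intro mult_left_mono) auto
  have "\<bar>real N * hrec w N - th * H\<bar> \<le> e * H + real J * (C * (2 * M * H / real N)) + th * (M * H / real N)"
    unfolding diff using A B th h0[of N] by (smt (verit) mult_nonneg_nonneg)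
  also have "\<dots> = (e + (2 * real J * C * M + th * M) / real N) * H" using Np by (simp add: field_simps)
  finally show ?thesis unfolding H_def .
qed

lemma hrec_ratio_limit:
  assumes w0: "\<And>j. j \<ge> 1 \<Longrightarrow> w j \<ge> 0" and wM: "\<And>j. j \<ge> 1 \<Longrightarrow> w j \<le> M"
    and lim: "w \<longlonglongrightarrow> th" and th: "th > 0"
  shows "(\<lambda>N. real N * hrec w N / hpsum w N) \<longlonglongrightarrow> th"
proof (rule tendstoI)
  fix \<epsilon> :: real assume \<epsilon>: "\<epsilon> > 0"
  have C: "\<bar>w j - th\<bar> \<le> M + th" if "j \<ge> 1" for j using w0[OF that] wM[OF that] th by auto
  have "\<forall>\<^sub>F j in sequentially. dist (w j) th < \<epsilon> / 2" using lim \<epsilon> by (intro tendstoD) auto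
  then obtain J0 where J0: "\<And>j. j \<ge> J0 \<Longrightarrow> \<bar>w j - th\<bar> < \<epsilon> / 2"
    by (auto simp: eventually_sequentially dist_real_def)
  define J B where "J = Suc J0" and "B = 2 * real J * (M + th) * M + th * M"
  have J: "\<And>j. j \<ge> J \<Longrightarrow> \<bar>w j - th\<bar> \<le> \<epsilon> / 2" "J \<ge> 1" using J0 unfolding J_def by (auto intro: less_imp_le)
  have "(\<lambda>N. B / real N) \<longlonglongrightarrow> 0" by (rule lim_const_over_n)
  then have "\<forall>\<^sub>F N in sequentially. B / real N < \<epsilon> / 2" using \<epsilon> by (intro order_tendstoD) auto
  then show "\<forall>\<^sub>F N in sequentially. dist (real N * hrec w N / hpsum w N) th < \<epsilon>"
    using eventually_ge_at_top[of "2 * J"]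
  proof eventually_elim
    case (elim N)
    have HN: "hpsum w N > 0" using hpsum_ge_1[of w, OF w0] by (smt (verit))
    have "\<bar>real N * hrec w N - th * hpsum w N\<bar> \<le> (\<epsilon> / 2 + B / real N) * hpsum w N"
      unfolding B_def by (rule hrec_ratio_error[OF w0 wM C less_imp_le[OF th] J elim(2)])
    then have "\<bar>real N * hrec w N / hpsum w N - th\<bar> \<le> \<epsilon> / 2 + B / real N"
      using HN by (simp add: field_simps abs_div_pos[symmetric] divide_le_eq)
    then show ?case using elim(1) unfolding dist_real_def by linarith
  qed
qed

text \<open>Partial sums: compare \<open>h\<close> with the reference sequence for \<open>w\<^sub>j = \<theta>\<close>
  via the Tauberian theorem.\<close>
lemma hpsum_asymp:
  assumes w0: "\<And>j. j \<ge> 1 \<Longrightarrow> w j \<ge> 0" and wM: "\<And>j. j \<ge> 1 \<Longrightarrow> w j \<le> M"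
    and lim: "w \<longlonglongrightarrow> th" and th: "th > 0"
  shows "(\<lambda>N. hpsum w N / (real N powr th * exp (Lambda_log w th (1 - 1 / real N))))
           \<longlonglongrightarrow> 1 / Gamma (th + 1)"
proof -
  obtain K where win: "\<forall>\<^sub>F N in sequentially. \<forall>\<delta>. 0 < \<delta> \<and> \<delta> \<le> 1/2 \<longrightarrow>
     (\<Sum>n\<in>window N \<delta>. hrec (\<lambda>_. th) n) \<le> K * (\<delta> + 1 / real N) * real N powr th"
    using const_window_bound[OF th] by blast
  show ?thesis unfolding hpsum_def
  proof (rule tauberian[where b = "hrec (\<lambda>_. th)" and Db = "\<lambda>N. real N powr th" and th = th, OF _ _ _ _ _ _ _ _ _ win])
    show "\<And>n. hrec w n \<ge> 0" by (rule hrec_nonneg[OF w0])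
    show "\<And>n. hrec (\<lambda>_. th) n \<ge> 0" using th by (intro hrec_nonneg) simp
    show "summable (\<lambda>n. hrec w n * t ^ n)" if "0 \<le> t" "t < 1" for t
      using that by (intro hrec_summable(1)[OF w0 wM]) auto
    show "summable (\<lambda>n. hrec (\<lambda>_. th) n * t ^ n)" if "0 \<le> t" "t < 1" for t
      using that th by (intro hrec_summable(1)[of _ th]) auto
    show "\<forall>\<^sub>F N in sequentially. real N powr th * exp (Lambda_log w th (1 - 1 / real N)) > 0"
      using eventually_gt_at_top[of 0] by eventually_elim simp
    show "\<forall>\<^sub>F N in sequentially. real N powr th > 0"
      using eventually_gt_at_top[of 0] by eventually_elim simp
    show "(\<lambda>N. (\<Sum>n. hrec w n * exp (-(real k + 1) / real N) ^ n) /
        (real N powr th * exp (Lambda_log w th (1 - 1 / real N)))) \<longlonglongrightarrow> (real k + 1) powr (- th)" for k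
      by (rule hrec_laplace_asymp[OF w0 wM lim th])
    show "(\<lambda>N. (\<Sum>n. hrec (\<lambda>_. th) n * exp (-(real k + 1) / real N) ^ n) / real N powr th)
        \<longlonglongrightarrow> (real k + 1) powr (- th)" for k
      using hrec_laplace_asymp[of "\<lambda>_. th" th th k] th unfolding Lambda_log_const by simp
    show "(\<lambda>N. (\<Sum>n\<le>N. hrec (\<lambda>_. th) n) / real N powr th) \<longlonglongrightarrow> 1 / Gamma (th + 1)"
      using hpsum_const_asymp[OF th] unfolding hpsum_def .
  qed
qed

text \<open>Multiplying the partial-sum asymptotics by \<open>N h\<^sub>N / \<Sum>\<^sub>n\<^sub>\<le>\<^sub>N h\<^sub>n \<rightarrow> \<theta>\<close>, and using
  \<open>\<theta> \<Gamma>(\<theta>) = \<Gamma>(\<theta>+1)\<close>.\<close>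
lemma hrec_asymp:
  assumes w0: "\<And>j. j \<ge> 1 \<Longrightarrow> w j \<ge> 0" and wM: "\<And>j. j \<ge> 1 \<Longrightarrow> w j \<le> M"
    and lim: "w \<longlonglongrightarrow> th" and th: "th > 0"
  shows "(\<lambda>N. hrec w N / (real N powr (th - 1) / Gamma th * Lambda w th (real N))) \<longlonglongrightarrow> 1"
proof -
  define D where "D N = real N powr th * exp (Lambda_log w th (1 - 1 / real N))" for N :: nat
  have Gpos: "Gamma th > 0" using th by (rule Gamma_real_pos)
  have "Gamma (th + 1) = th * Gamma th"
    using th by (intro Gamma_plus1) (auto elim!: nonpos_Ints_cases)
  moreover have "Gamma th \<noteq> 0" using Gpos by simp
  ultimately have one: "th * (1 / Gamma (th + 1)) * Gamma th = 1" using th by simp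
  have "(\<lambda>N. (real N * hrec w N / hpsum w N) * (hpsum w N / D N) * Gamma th)
      \<longlonglongrightarrow> th * (1 / Gamma (th + 1)) * Gamma th"
    unfolding D_def by (intro tendsto_intros hrec_ratio_limit[OF w0 wM lim th] hpsum_asymp[OF w0 wM lim th])
  moreover have "\<forall>\<^sub>F N in sequentially. (real N * hrec w N / hpsum w N) * (hpsum w N / D N) * Gamma th
      = hrec w N / (real N powr (th - 1) / Gamma th * Lambda w th (real N))"
    using eventually_gt_at_top[of 0]
  proof eventually_elim
    case (elim N)
    have Np: "real N > 0" and Hp: "hpsum w N > 0" and Dp: "D N > 0"
      using elim hpsum_ge_1[of w, OF w0] unfolding D_def by (auto intro: less_le_trans[OF zero_less_one])
    have eq: "real N powr (th - 1) / Gamma th * Lambda w th (real N) = D N / (real N * Gamma th)"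
      unfolding D_def Lambda_eq_exp_Lambda_log using Np by (simp add: powr_diff field_simps)
    show ?case unfolding eq using Np Hp Dp Gpos by (simp add: field_simps)
  qed
  ultimately have "(\<lambda>N. hrec w N / (real N powr (th - 1) / Gamma th * Lambda w th (real N)))
      \<longlonglongrightarrow> th * (1 / Gamma (th + 1)) * Gamma th"
    by (rule Lim_transform_eventually)
  then show ?thesis unfolding one .
qed

theorem proposition6p3:
  fixes \<theta> :: "nat \<Rightarrow> real" and th :: real
  assumes "\<And>j. j \<ge> 1 \<Longrightarrow> \<theta> j \<ge> 0"
    and "\<theta> \<longlonglongrightarrow> th"
    and "th > 0"
  shows "(\<lambda>n. hseq \<theta> n) \<sim>[at_top]
           (\<lambda>n. real n powr (th - 1) / Gamma th * Lambda \<theta> th (real n))"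
proof -
  obtain M where "\<And>j. norm (\<theta> j) \<le> M"
    using convergent_imp_Bseq[OF convergentI[OF assms(2)]] by (metis BseqE)
  then have bounded: "\<theta> j \<le> M" for j by (simp add: abs_le_iff)
  have "(\<lambda>n. hrec \<theta> n / (real n powr (th - 1) / Gamma th * Lambda \<theta> th (real n))) \<longlonglongrightarrow> 1"
    using hrec_asymp[OF assms(1) bounded assms(2,3)] .
  then show ?thesis unfolding hseq_eq_hrec by (rule asymp_equivI')
qed

end
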